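(* For every term $M$ of $\ell\Lambda_\infty^{4S}$ there is a normal form $N$, itself a term of $\ell\Lambda_\infty^{4S}$, such that $M\Rightarrow N$.
   Context: Preterms: possibly infinite trees generated by $M ::= x \mid MN \mid \lambda x.M \mid \lambda^{\downarrow}x.M \mid \lambda^{\uparrow}x.M \mid \downarrow M \mid \uparrow M$ ($\downarrow M$ inductive box, $\uparrow M$ coinductive box); substitution is capture-avoiding. Patterns: $x,\downarrow x,\uparrow x,\#x,\dagger x$; environments: finite sets of patterns, each variable in at most one; $\Theta,\Xi,\Psi,\Phi$ linear environments with marked versions $\#\Theta$ etc.; $\Upsilon,\Pi$ environments with only patterns $y$, $\downarrow y$; commas are disjoint unions. A term of $\ell\Lambda_\infty^{4S}$ is a preterm $M$ with $\Gamma\vdash M$ derivable for some $\Gamma$ by: (vl) $\#\Theta,\uparrow\Xi,\dagger\Psi,x\vdash x$; (vd) $\#\Theta,\uparrow\Xi,\dagger\Psi,\#x\vdash x$; (va) $\#\Theta,\uparrow\Xi,\dagger\Psi,\dagger x\vdash x$; (a) from $\Upsilon,\#\Theta,\uparrow\Xi,\dagger\Psi\vdash M$ and $\Pi,\#\Theta,\uparrow\Xi,\dagger\Psi\vdash N$ infer $\Upsilon,\Pi,\#\Theta,\uparrow\Xi,\dagger\Psi\vdash MN$; (ll) $\Gamma,x\vdash M$ gives $\Gamma\vdash\lambda x.M$; (li)$_1$ $\Gamma,\#x\vdash M$ gives $\Gamma\vdash\lambda^\downarrow x.M$; (li)$_2$ $\Gamma,\downarrow x\vdash M$ gives $\Gamma\vdash\lambda^\downarrow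 x.M$; (lc) $\Gamma,\uparrow x\vdash M$ gives $\Gamma\vdash\lambda^\uparrow x.M$; (mi) from $\Xi,\uparrow\Psi,\dagger\Phi\vdash M$ infer $\#\Theta,\downarrow\Xi,\uparrow\Psi,\dagger\Phi\vdash\downarrow M$; (mc) from $\dagger\Xi,\dagger\Psi\vdash M$ infer $\#\Theta,\uparrow\Xi,\dagger\Psi\vdash\uparrow M$; (mc) coinductive, others inductive (every infinite branch of a derivation contains infinitely many (mc)). Basic reduction: $(\lambda x.M)N\mapsto M[N/x]$, $(\lambda^\downarrow x.M)(\downarrow N)\mapsto M[N/x]$, $(\lambda^\uparrow x.M)(\uparrow N)\mapsto M[N/x]$; $M\to N$ iff $M=C[L]$, $N=C[P]$, $L\mapsto P$ for a one-hole context $C$. A normal form is a preterm $N$ with no $N'$ such that $N\to N'$. Infinitary reduction $\Rightarrow$ and the auxiliary relation $\leadsto$ are given by the mixed formal system: (coinductive rule) if $M\to^*N$ and $N\leadsto L$ then $M\Rightarrow L$; (inductive rules) $x\leadsto x$; if $M\leadsto N$ and $L\leadsto P$ then $ML\leadsto NP$; if $M\leadsto N$ then $\lambda x.M\leadsto\lambda x.N$, $\lambda^\downarrow x.M\leadsto\lambda^\downarrow x.N$, $\lambda^\uparrow x.M\leadsto\lambda^\uparrow x.N$ and $\downarrow M\leadsto\downarrow N$; if $M\Rightarrow N$ then $\uparrow M\leadsto\uparrow N$. A judgment holds iff it is the root of a possibly infinite derivation tree in which every infinite branch uses the coinductive rule infinitely often. *)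

theory Defs
  imports Main
begin

text \<open>Preterms of the infinitary linear lambda calculus, possibly infinite,
  represented with de Bruijn indices (so capture-avoiding substitution is built in).
  Lam = \<lambda>x, LamI = \<lambda>\<down>x, LamC = \<lambda>\<up>x, BoxI = \<down>M (inductive box),
  BoxC = \<up>M (coinductive box).\<close>

codatatype trm =
    Var nat
  | App trm trm
  | Lam trm
  | LamI trm
  | LamC trm
  | BoxI trm
  | BoxC trm

primcorec lift :: "nat \<Rightarrow> nat \<Rightarrow> trm \<Rightarrow> trm" where
  "lift c n t = (case t of
      Var i \<Rightarrow> Var (if i < c then i else i + n)
    | App a b \<Rightarrow> App (lift c n a) (lift c n b)
    | Lam a \<Rightarrow> Lam (lift (Suc c) n a)
    | LamI a \<Rightarrow> LamI (lift (Suc c) n a)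
    | LamC a \<Rightarrow> LamC (lift (Suc c) n a)
    | BoxI a \<Rightarrow> BoxI (lift c n a)
    | BoxC a \<Rightarrow> BoxC (lift c n a))"

text \<open>substR k N M P : P is M with index k replaced by N (capture avoiding, de Bruijn).
  Defined coinductively since terms may be infinite; it is functional.\<close>
coinductive substR :: "nat \<Rightarrow> trm \<Rightarrow> trm \<Rightarrow> trm \<Rightarrow> bool" where
  s_var: "substR k N (Var i)
            (if i = k then lift 0 k N else if k < i then Var (i - 1) else Var i)"
| s_app: "substR k N M1 P1 \<Longrightarrow> substR k N M2 P2 \<Longrightarrow> substR k N (App M1 M2) (App P1 P2)"
| s_lam: "substR (Suc k) N M P \<Longrightarrow> substR k N (Lam M) (Lam P)"
| s_lamI: "substR (Suc k) N M P \<Longrightarrow> substR k N (LamI M) (LamI P)"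
| s_lamC: "substR (Suc k) N M P \<Longrightarrow> substR k N (LamC M) (LamC P)"
| s_boxI: "substR k N M P \<Longrightarrow> substR k N (BoxI M) (BoxI P)"
| s_boxC: "substR k N M P \<Longrightarrow> substR k N (BoxC M) (BoxC P)"

inductive basic :: "trm \<Rightarrow> trm \<Rightarrow> bool" where
  b_lin: "substR 0 N M P \<Longrightarrow> basic (App (Lam M) N) P"
| b_ind: "substR 0 N M P \<Longrightarrow> basic (App (LamI M) (BoxI N)) P"
| b_coi: "substR 0 N M P \<Longrightarrow> basic (App (LamC M) (BoxC N)) P"

inductive step :: "trm \<Rightarrow> trm \<Rightarrow> bool" where
  st_basic: "basic M N \<Longrightarrow> step M N"
| st_appL: "step M M' \<Longrightarrow> step (App M N) (App M' N)"
| st_appR: "step N N' \<Longrightarrow> step (App M N) (App M N')"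
| st_lam: "step M M' \<Longrightarrow> step (Lam M) (Lam M')"
| st_lamI: "step M M' \<Longrightarrow> step (LamI M) (LamI M')"
| st_lamC: "step M M' \<Longrightarrow> step (LamC M) (LamC M')"
| st_boxI: "step M M' \<Longrightarrow> step (BoxI M) (BoxI M')"
| st_boxC: "step M M' \<Longrightarrow> step (BoxC M) (BoxC M')"

definition normal_form :: "trm \<Rightarrow> bool" where
  "normal_form N \<longleftrightarrow> \<not> (\<exists>N'. step N N')"

text \<open>Infinitary reduction: the auxiliary relation (inductive rules), parametrised by
  the relation used in the premise of the \<up>-rule, then the coinductive rule.\<close>
inductive leadsI :: "(trm \<Rightarrow> trm \<Rightarrow> bool) \<Rightarrow> trm \<Rightarrow> trm \<Rightarrow> bool" for R where
  l_var: "leadsI R (Var x) (Var x)"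
| l_app: "leadsI R M N \<Longrightarrow> leadsI R L P \<Longrightarrow> leadsI R (App M L) (App N P)"
| l_lam: "leadsI R M N \<Longrightarrow> leadsI R (Lam M) (Lam N)"
| l_lamI: "leadsI R M N \<Longrightarrow> leadsI R (LamI M) (LamI N)"
| l_lamC: "leadsI R M N \<Longrightarrow> leadsI R (LamC M) (LamC N)"
| l_boxI: "leadsI R M N \<Longrightarrow> leadsI R (BoxI M) (BoxI N)"
| l_boxC: "R M N \<Longrightarrow> leadsI R (BoxC M) (BoxC N)"

lemma leadsI_mono_aux:
  "leadsI R M N \<Longrightarrow> (\<And>a b. R a b \<longrightarrow> S a b) \<Longrightarrow> leadsI S M N"
  by (induction rule: leadsI.induct) (auto intro: leadsI.intros)

lemma leadsI_mono[mono]: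
  "(\<And>a b. R a b \<longrightarrow> S a b) \<Longrightarrow> leadsI R M N \<longrightarrow> leadsI S M N"
  using leadsI_mono_aux by blast

coinductive infred :: "trm \<Rightarrow> trm \<Rightarrow> bool" where
  "step\<^sup>*\<^sup>* M N \<Longrightarrow> leadsI infred N L \<Longrightarrow> infred M L"

text \<open>Patterns: PL = x, PI = \<down>x, PC = \<up>x, PH = #x, PD = \<dagger>x.
  An environment assigns to each (de Bruijn) variable at most one pattern.\<close>
datatype pat = PL | PI | PC | PH | PD

type_synonym env = "nat \<Rightarrow> pat option"

definition push :: "pat \<Rightarrow> env \<Rightarrow> env" where
  "push p \<Gamma> = (\<lambda>i. case i of 0 \<Rightarrow> Some p | Suc j \<Rightarrow> \<Gamma> j)"

definition app_split :: "env \<Rightarrow> env \<Rightarrow> env \<Rightarrow> bool" where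
  "app_split \<Gamma> \<Gamma>1 \<Gamma>2 \<longleftrightarrow> (\<forall>y.
     (\<Gamma> y \<in> {Some PL, Some PI} \<longrightarrow>
        (\<Gamma>1 y = \<Gamma> y \<and> \<Gamma>2 y = None) \<or> (\<Gamma>1 y = None \<and> \<Gamma>2 y = \<Gamma> y)) \<and>
     (\<Gamma> y \<notin> {Some PL, Some PI} \<longrightarrow> \<Gamma>1 y = \<Gamma> y \<and> \<Gamma>2 y = \<Gamma> y))"

definition mi_env :: "env \<Rightarrow> env" where
  "mi_env \<Gamma> = (\<lambda>y. case \<Gamma> y of Some PH \<Rightarrow> None | Some PI \<Rightarrow> Some PL | v \<Rightarrow> v)"

definition mc_env :: "env \<Rightarrow> env" where
  "mc_env \<Gamma> = (\<lambda>y. case \<Gamma> y of Some PH \<Rightarrow> None | Some PC \<Rightarrow> Some PD | v \<Rightarrow> v)"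

inductive tyI :: "(env \<Rightarrow> trm \<Rightarrow> bool) \<Rightarrow> env \<Rightarrow> trm \<Rightarrow> bool" for R where
  t_var: "\<Gamma> x \<in> {Some PL, Some PH, Some PD} \<Longrightarrow>
          (\<forall>y. y \<noteq> x \<longrightarrow> \<Gamma> y \<in> {None, Some PH, Some PC, Some PD}) \<Longrightarrow>
          tyI R \<Gamma> (Var x)"
| t_app: "app_split \<Gamma> \<Gamma>1 \<Gamma>2 \<Longrightarrow> tyI R \<Gamma>1 M \<Longrightarrow> tyI R \<Gamma>2 N \<Longrightarrow> tyI R \<Gamma> (App M N)"
| t_ll: "tyI R (push PL \<Gamma>) M \<Longrightarrow> tyI R \<Gamma> (Lam M)"
| t_li1: "tyI R (push PH \<Gamma>) M \<Longrightarrow> tyI R \<Gamma> (LamI M)"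
| t_li2: "tyI R (push PI \<Gamma>) M \<Longrightarrow> tyI R \<Gamma> (LamI M)"
| t_lc: "tyI R (push PC \<Gamma>) M \<Longrightarrow> tyI R \<Gamma> (LamC M)"
| t_mi: "(\<forall>y. \<Gamma> y \<noteq> Some PL) \<Longrightarrow> tyI R (mi_env \<Gamma>) M \<Longrightarrow> tyI R \<Gamma> (BoxI M)"
| t_mc: "(\<forall>y. \<Gamma> y \<in> {None, Some PH, Some PC, Some PD}) \<Longrightarrow> R (mc_env \<Gamma>) M \<Longrightarrow>
         tyI R \<Gamma> (BoxC M)"

lemma tyI_mono_aux:
  "tyI R \<Gamma> M \<Longrightarrow> (\<And>a b. R a b \<longrightarrow> S a b) \<Longrightarrow> tyI S \<Gamma> M"
  by (induction rule: tyI.induct) (auto intro: tyI.intros)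

lemma tyI_mono[mono]:
  "(\<And>a b. R a b \<longrightarrow> S a b) \<Longrightarrow> tyI R \<Gamma> M \<longrightarrow> tyI S \<Gamma> M"
  using tyI_mono_aux by blast

text \<open>(mc) is the only coinductive rule: greatest fixed point over it, least over the rest.\<close>
coinductive ty :: "env \<Rightarrow> trm \<Rightarrow> bool" where
  "tyI ty \<Gamma> M \<Longrightarrow> ty \<Gamma> M"

definition is_term :: "trm \<Rightarrow> bool" where
  "is_term M \<longleftrightarrow> (\<exists>\<Gamma>. finite (dom \<Gamma>) \<and> ty \<Gamma> M)"

end

theory Submission
  imports Defs "HOL-Library.Multiset_Order"
begin

text \<open>Normalisation proceeds in two layers. Reduction outside coinductive boxes preserves
  typing (up to turning some patterns \<open>\<down>x\<close> into \<open>#x\<close>) and terminates: the multiset of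
  \<open>\<down>\<close>-nesting depths of the nodes of the inductive part of a term decreases in the multiset
  order, because a linear variable occurs exactly once, a \<open>#\<close>-variable never inside a
  \<open>\<down>\<close>-box, and a \<open>\<down>\<close>-variable exactly once and inside exactly one \<open>\<down>\<close>-box.
  Reducing a term to such a normal form and repeating this corecursively under every
  coinductive box gives a typable normal form; each \<open>\<up>\<close>-box guards one use of the
  coinductive rule of infinitary reduction.\<close>

lemma lift_simps [simp]:
  "lift c n (Var i) = Var (if i < c then i else i + n)"
  "lift c n (App a b) = App (lift c n a) (lift c n b)"
  "lift c n (Lam a) = Lam (lift (Suc c) n a)"
  "lift c n (LamI a) = LamI (lift (Suc c) n a)"
  "lift c n (LamC a) = LamC (lift (Suc c) n a)"
  "lift c n (BoxI a) = BoxI (lift c n a)"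
  "lift c n (BoxC a) = BoxC (lift c n a)"
  by (subst lift.code; simp)+

primcorec substitute :: "nat \<Rightarrow> trm \<Rightarrow> trm \<Rightarrow> trm" where
  "substitute k N M = (case M of
      Var i \<Rightarrow> (if i = k then lift 0 k N else if k < i then Var (i - 1) else Var i)
    | App a b \<Rightarrow> App (substitute k N a) (substitute k N b)
    | Lam a \<Rightarrow> Lam (substitute (Suc k) N a)
    | LamI a \<Rightarrow> LamI (substitute (Suc k) N a)
    | LamC a \<Rightarrow> LamC (substitute (Suc k) N a)
    | BoxI a \<Rightarrow> BoxI (substitute k N a)
    | BoxC a \<Rightarrow> BoxC (substitute k N a))"

lemma substitute_simps [simp]:
  "substitute k N (Var i) = (if i = k then lift 0 k N else if k < i then Var (i - 1) else Var i)"
  "substitute k N (App a b) = App (substitute k N a) (substitute k N b)"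
  "substitute k N (Lam a) = Lam (substitute (Suc k) N a)"
  "substitute k N (LamI a) = LamI (substitute (Suc k) N a)"
  "substitute k N (LamC a) = LamC (substitute (Suc k) N a)"
  "substitute k N (BoxI a) = BoxI (substitute k N a)"
  "substitute k N (BoxC a) = BoxC (substitute k N a)"
  by (subst substitute.code; simp)+

lemma substR_substitute: "substR k N M (substitute k N M)"
proof (coinduction arbitrary: k M rule: substR.coinduct)
  case substR
  show ?case by (cases M) auto
qed

lemma substR_VarD:
  "substR k N (Var x) P \<Longrightarrow> P = (if x = k then lift 0 k N else if k < x then Var (x - 1) else Var x)"
  by (cases rule: substR.cases) auto

lemma substR_AppD:
  "substR k N (App a b) P \<Longrightarrow> \<exists>P1 P2. P = App P1 P2 \<and> substR k N a P1 \<and> substR k N b P2"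
  by (cases rule: substR.cases) auto

lemma substR_LamD: "substR k N (Lam a) P \<Longrightarrow> \<exists>P1. P = Lam P1 \<and> substR (Suc k) N a P1"
  by (cases rule: substR.cases) auto

lemma substR_LamID: "substR k N (LamI a) P \<Longrightarrow> \<exists>P1. P = LamI P1 \<and> substR (Suc k) N a P1"
  by (cases rule: substR.cases) auto

lemma substR_LamCD: "substR k N (LamC a) P \<Longrightarrow> \<exists>P1. P = LamC P1 \<and> substR (Suc k) N a P1"
  by (cases rule: substR.cases) auto

lemma substR_BoxID: "substR k N (BoxI a) P \<Longrightarrow> \<exists>P1. P = BoxI P1 \<and> substR k N a P1"
  by (cases rule: substR.cases) auto

lemma substR_BoxCD: "substR k N (BoxC a) P \<Longrightarrow> \<exists>P1. P = BoxC P1 \<and> substR k N a P1"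
  by (cases rule: substR.cases) auto

lemma pat_option_cases [case_names None PL PI PC PH PD]:
  obtains "v = None" | "v = Some PL" | "v = Some PI" | "v = Some PC" | "v = Some PH" | "v = Some PD"
  by (metis not_Some_eq pat.exhaust)

definition nonlinear :: "env \<Rightarrow> bool" where
  "nonlinear D \<longleftrightarrow> (\<forall>y. D y \<in> {None, Some PH, Some PC, Some PD})"

lemma push_0 [simp]: "push p G 0 = Some p"
  unfolding push_def by simp

lemma push_Suc [simp]: "push p G (Suc k) = G k"
  unfolding push_def by simp

lemma push_tail: "G 0 = Some p \<Longrightarrow> G = push p (\<lambda>j. G (Suc j))"
  by (rule ext) (auto simp: push_def split: nat.split)

lemma finite_dom_push: "finite (dom G) \<Longrightarrow> finite (dom (push p G))"
proof -
  assume "finite (dom G)"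
  moreover have "dom (push p G) \<subseteq> insert 0 (Suc ` dom G)"
  proof
    fix x assume "x \<in> dom (push p G)"
    then show "x \<in> insert 0 (Suc ` dom G)" by (cases x) (auto simp: push_def)
  qed
  ultimately show ?thesis
    by (meson finite_imageI finite_insert finite_subset)
qed

definition pat_mi :: "pat option \<Rightarrow> pat option" where
  "pat_mi v = (case v of Some PH \<Rightarrow> None | Some PI \<Rightarrow> Some PL | v \<Rightarrow> v)"

definition pat_mc :: "pat option \<Rightarrow> pat option" where
  "pat_mc v = (case v of Some PH \<Rightarrow> None | Some PC \<Rightarrow> Some PD | v \<Rightarrow> v)"

lemma mi_env_apply: "mi_env G y = pat_mi (G y)"
  unfolding mi_env_def pat_mi_def by simp

lemma mc_env_apply: "mc_env G y = pat_mc (G y)"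
  unfolding mc_env_def pat_mc_def by simp

lemma finite_dom_mi_env: "finite (dom G) \<Longrightarrow> finite (dom (mi_env G))"
  by (rule finite_subset[rotated]) (auto simp: mi_env_def split: option.splits)

lemma finite_dom_mc_env: "finite (dom G) \<Longrightarrow> finite (dom (mc_env G))"
  by (rule finite_subset[rotated]) (auto simp: mc_env_def split: option.splits)

definition pat_split :: "pat option \<Rightarrow> pat option \<Rightarrow> pat option \<Rightarrow> bool" where
  "pat_split g g1 g2 \<longleftrightarrow> (g \<in> {Some PL, Some PI} \<longrightarrow> (g1 = g \<and> g2 = None) \<or> (g1 = None \<and> g2 = g)) \<and>
     (g \<notin> {Some PL, Some PI} \<longrightarrow> g1 = g \<and> g2 = g)"

lemma app_split_iff: "app_split G G1 G2 \<longleftrightarrow> (\<forall>y. pat_split (G y) (G1 y) (G2 y))"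
  unfolding app_split_def pat_split_def by blast

lemma pat_splitE:
  assumes "pat_split g g1 g2"
  obtains (left) "g \<in> {Some PL, Some PI}" "g1 = g" "g2 = None"
    | (right) "g \<in> {Some PL, Some PI}" "g1 = None" "g2 = g"
    | (shared) "g \<notin> {Some PL, Some PI}" "g1 = g" "g2 = g"
  using assms unfolding pat_split_def by blast

lemma app_split_sym: "app_split G G1 G2 \<Longrightarrow> app_split G G2 G1"
  unfolding app_split_def by blast

lemma finite_dom_app_split:
  assumes "app_split G G1 G2" "finite (dom G)"
  shows "finite (dom G1)" "finite (dom G2)"
proof -
  have "dom G1 \<subseteq> dom G" "dom G2 \<subseteq> dom G"
    using assms(1) unfolding app_split_def dom_def by force+
  then show "finite (dom G1)" "finite (dom G2)"
    using assms(2) finite_subset by blast+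
qed

lemma tyI_AppD: "tyI R G (App M N) \<Longrightarrow> \<exists>G1 G2. app_split G G1 G2 \<and> tyI R G1 M \<and> tyI R G2 N"
  by (erule tyI.cases) auto

lemma tyI_LamD: "tyI R G (Lam M) \<Longrightarrow> tyI R (push PL G) M"
  by (erule tyI.cases) auto

lemma tyI_LamID: "tyI R G (LamI M) \<Longrightarrow> tyI R (push PH G) M \<or> tyI R (push PI G) M"
  by (erule tyI.cases) auto

lemma tyI_LamCD: "tyI R G (LamC M) \<Longrightarrow> tyI R (push PC G) M"
  by (erule tyI.cases) auto

lemma tyI_BoxID: "tyI R G (BoxI M) \<Longrightarrow> (\<forall>y. G y \<noteq> Some PL) \<and> tyI R (mi_env G) M"
  by (erule tyI.cases) auto

lemma tyI_BoxCD: "tyI R G (BoxC M) \<Longrightarrow> nonlinear G \<and> R (mc_env G) M"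
  by (erule tyI.cases) (auto simp: nonlinear_def)

lemma ty_tyI: "ty G M \<Longrightarrow> tyI ty G M"
  by (cases rule: ty.cases) auto

lemma tyI_ty: "tyI ty G M \<Longrightarrow> ty G M"
  by (rule ty.intros)

lemma ty_coinduct_upto:
  assumes "X G M" and "\<And>G M. X G M \<Longrightarrow> tyI (\<lambda>G M. X G M \<or> ty G M) G M"
  shows "ty G M"
  using assms by (coinduction arbitrary: G M rule: ty.coinduct) auto

section \<open>Weakening and lifting\<close>

definition pat_weaker :: "pat option \<Rightarrow> pat option \<Rightarrow> bool" where
  "pat_weaker g g' \<longleftrightarrow> g' = g \<or> (g \<in> {None, Some PL} \<and> g' = Some PH)
     \<or> (g = None \<and> g' \<in> {Some PC, Some PD})"

definition env_weaker :: "env \<Rightarrow> env \<Rightarrow> bool" where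
  "env_weaker G G' \<longleftrightarrow> (\<forall>y. pat_weaker (G y) (G' y))"

lemma env_weaker_push: "env_weaker G G' \<Longrightarrow> env_weaker (push p G) (push p G')"
  unfolding env_weaker_def pat_weaker_def push_def by (auto split: nat.split)

lemma app_split_weaker:
  assumes "app_split G G1 G2" "env_weaker G G'"
  obtains G1' G2' where "app_split G' G1' G2'" "env_weaker G1 G1'" "env_weaker G2 G2'"
proof
  let ?h = "\<lambda>H y. if G' y = G y then H y else G' y"
  have "pat_split (G' y) (?h G1 y) (?h G2 y) \<and> pat_weaker (G1 y) (?h G1 y)
      \<and> pat_weaker (G2 y) (?h G2 y)" for y
  proof -
    have "pat_split (G y) (G1 y) (G2 y)" "pat_weaker (G y) (G' y)"
      using assms unfolding app_split_iff env_weaker_def by blast+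
    then show ?thesis
      by (cases "G y" rule: pat_option_cases; cases "G' y" rule: pat_option_cases)
        (auto simp: pat_split_def pat_weaker_def)
  qed
  then show "app_split G' (?h G1) (?h G2)" "env_weaker G1 (?h G1)" "env_weaker G2 (?h G2)"
    unfolding app_split_iff env_weaker_def by blast+
qed

lemma pat_weaker_var:
  assumes "pat_weaker g g'"
  shows "g \<in> {Some PL, Some PH, Some PD} \<Longrightarrow> g' \<in> {Some PL, Some PH, Some PD}"
    and "g \<in> {None, Some PH, Some PC, Some PD} \<Longrightarrow> g' \<in> {None, Some PH, Some PC, Some PD}"
  using assms unfolding pat_weaker_def by auto

lemma pat_weaker_mi: "pat_weaker g g' \<Longrightarrow> g \<noteq> Some PL \<Longrightarrow> g' \<noteq> Some PL \<and> pat_weaker (pat_mi g) (pat_mi g')"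
  by (cases g rule: pat_option_cases; cases g' rule: pat_option_cases) (auto simp: pat_weaker_def pat_mi_def)

lemma pat_weaker_mc:
  "pat_weaker g g' \<Longrightarrow> g \<in> {None, Some PH, Some PC, Some PD} \<Longrightarrow>
    g' \<in> {None, Some PH, Some PC, Some PD} \<and> pat_weaker (pat_mc g) (pat_mc g')"
  by (cases g rule: pat_option_cases; cases g' rule: pat_option_cases) (auto simp: pat_weaker_def pat_mc_def)

lemma tyI_weaken:
  assumes "tyI R G M" "env_weaker G G'"
  shows "tyI (\<lambda>D M. \<exists>D0. R D0 M \<and> env_weaker D0 D) G' M"
  using assms
proof (induction arbitrary: G' rule: tyI.induct)
  case (t_var G x)
  have "pat_weaker (G y) (G' y)" for y
    using t_var.prems unfolding env_weaker_def by blast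
  note w = this
  show ?case
  proof (rule tyI.t_var)
    show "G' x \<in> {Some PL, Some PH, Some PD}"
      using pat_weaker_var(1)[OF w] t_var.hyps(1) .
    show "\<forall>y. y \<noteq> x \<longrightarrow> G' y \<in> {None, Some PH, Some PC, Some PD}"
      using pat_weaker_var(2)[OF w] t_var.hyps(2) by blast
  qed
next
  case (t_app G G1 G2 M N)
  obtain G1' G2' where "app_split G' G1' G2'" "env_weaker G1 G1'" "env_weaker G2 G2'"
    using app_split_weaker[OF t_app.hyps(1) t_app.prems] .
  then show ?case using t_app.IH by (blast intro: tyI.t_app)
next
  case (t_mi G M)
  then have "\<forall>y. G' y \<noteq> Some PL" "env_weaker (mi_env G) (mi_env G')"
    using pat_weaker_mi unfolding env_weaker_def mi_env_apply by blast+
  then show ?case using t_mi.IH by (blast intro: tyI.t_mi)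
next
  case (t_mc G M)
  then have "\<forall>y. G' y \<in> {None, Some PH, Some PC, Some PD}" "env_weaker (mc_env G) (mc_env G')"
    using pat_weaker_mc unfolding env_weaker_def mc_env_apply by blast+
  then show ?case using t_mc.hyps(2) by (blast intro: tyI.t_mc)
next
  case (t_ll G M) then show ?case by (blast intro: tyI.t_ll env_weaker_push)
next
  case (t_li1 G M) then show ?case by (blast intro: tyI.t_li1 env_weaker_push)
next
  case (t_li2 G M) then show ?case by (blast intro: tyI.t_li2 env_weaker_push)
next
  case (t_lc G M) then show ?case by (blast intro: tyI.t_lc env_weaker_push)
qed

lemma ty_weaken:
  assumes "ty G M" "env_weaker G G'"
  shows "ty G' M"
proof (rule ty_coinduct_upto[where X = "\<lambda>D N. \<exists>G. ty G N \<and> env_weaker G D"])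
  show "\<exists>G. ty G M \<and> env_weaker G G'" using assms by blast
next
  fix D N assume "\<exists>G. ty G N \<and> env_weaker G D"
  then obtain G where "ty G N" "env_weaker G D" by blast
  show "tyI (\<lambda>D N. (\<exists>G. ty G N \<and> env_weaker G D) \<or> ty D N) D N"
    by (rule tyI_mono_aux[OF tyI_weaken[OF ty_tyI[OF \<open>ty G N\<close>] \<open>env_weaker G D\<close>]]) blast
qed

definition env_lift :: "nat \<Rightarrow> nat \<Rightarrow> env \<Rightarrow> env" where
  "env_lift c n D = (\<lambda>i. if i < c then D i else if i < c + n then None else D (i - n))"

lemma env_lift_push: "env_lift (Suc c) n (push p D) = push p (env_lift c n D)"
  by (rule ext) (auto simp: env_lift_def push_def Suc_diff_le split: nat.split)

lemma env_lift_mi_env: "env_lift c n (mi_env D) = mi_env (env_lift c n D)"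
  unfolding env_lift_def mi_env_def by auto

lemma env_lift_mc_env: "env_lift c n (mc_env D) = mc_env (env_lift c n D)"
  unfolding env_lift_def mc_env_def by auto

lemma tyI_lift:
  assumes "tyI R D M"
  shows "tyI (\<lambda>T L. \<exists>c n D N. R D N \<and> T = env_lift c n D \<and> L = lift c n N) (env_lift c n D) (lift c n M)"
  using assms
proof (induction arbitrary: c rule: tyI.induct)
  case (t_var G x)
  show ?case
    unfolding lift_simps
  proof (rule tyI.t_var)
    show "env_lift c n G (if x < c then x else x + n) \<in> {Some PL, Some PH, Some PD}"
      using t_var(1) by (simp add: env_lift_def)
    show "\<forall>y. y \<noteq> (if x < c then x else x + n) \<longrightarrow> env_lift c n G y \<in> {None, Some PH, Some PC, Some PD}"
      using t_var(2) by (auto simp: env_lift_def)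
  qed
next
  case (t_app G G1 G2 M N)
  have "app_split (env_lift c n G) (env_lift c n G1) (env_lift c n G2)"
    using t_app(1) unfolding app_split_def env_lift_def by auto
  then show ?case using t_app by (auto intro: tyI.t_app)
next
  case (t_mi G M)
  have "\<forall>y. env_lift c n G y \<noteq> Some PL" using t_mi(1) by (simp add: env_lift_def)
  then show ?case using t_mi by (auto intro!: tyI.t_mi simp: env_lift_mi_env[symmetric])
next
  case (t_mc G M)
  have "\<forall>y. env_lift c n G y \<in> {None, Some PH, Some PC, Some PD}" using t_mc(1) by (simp add: env_lift_def)
  moreover have "\<exists>c' n' D N. R D N \<and> mc_env (env_lift c n G) = env_lift c' n' D \<and> lift c n M = lift c' n' N"
    by (intro exI[of _ c] exI[of _ n] exI[of _ "mc_env G"] exI[of _ M])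
      (simp add: env_lift_mc_env t_mc(2))
  ultimately show ?case unfolding lift_simps by (rule tyI.t_mc)
next
  case (t_ll G M) then show ?case by (auto intro!: tyI.t_ll simp: env_lift_push[symmetric])
next
  case (t_li1 G M) then show ?case by (auto intro!: tyI.t_li1 simp: env_lift_push[symmetric])
next
  case (t_li2 G M) then show ?case by (auto intro!: tyI.t_li2 simp: env_lift_push[symmetric])
next
  case (t_lc G M) then show ?case by (auto intro!: tyI.t_lc simp: env_lift_push[symmetric])
qed

lemma ty_lift:
  assumes "ty D M"
  shows "ty (env_lift c n D) (lift c n M)"
proof (rule ty_coinduct_upto[where X = "\<lambda>T L. \<exists>c n D N. ty D N \<and> T = env_lift c n D \<and> L = lift c n N"])
  show "\<exists>c' n' D' N. ty D' N \<and> env_lift c n D = env_lift c' n' D' \<and> lift c n M = lift c' n' N"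
    using assms by blast
next
  fix T L assume "\<exists>c n D N. ty D N \<and> T = env_lift c n D \<and> L = lift c n N"
  then obtain c n D N where h: "ty D N" "T = env_lift c n D" "L = lift c n N" by blast
  show "tyI (\<lambda>T L. (\<exists>c n D N. ty D N \<and> T = env_lift c n D \<and> L = lift c n N) \<or> ty T L) T L"
    unfolding h(2,3) by (rule tyI_mono_aux[OF tyI_lift[OF ty_tyI[OF h(1)]]]) blast
qed

section \<open>The substitution lemma\<close>

definition pat_merge :: "pat option \<Rightarrow> pat option \<Rightarrow> pat option" where
  "pat_merge a b = (if a = None then b else a)"

text \<open>Environment of \<open>M[N/k]\<close> when \<open>M\<close> is typed in \<open>G\<close> and \<open>N\<close> contributes \<open>D\<close>:
  index \<open>k\<close> is removed and the indices of \<open>D\<close>, shifted past the \<open>k\<close> binders, are merged in.\<close>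

definition env_subst :: "nat \<Rightarrow> env \<Rightarrow> env \<Rightarrow> env" where
  "env_subst k G D = (\<lambda>i. if i < k then G i else pat_merge (G (Suc i)) (D (i - k)))"

definition pat_compat :: "pat option \<Rightarrow> pat option \<Rightarrow> bool" where
  "pat_compat g d \<longleftrightarrow> g = None \<or> d = None \<or> (g = d \<and> d \<in> {Some PH, Some PC, Some PD})"

definition env_compat :: "nat \<Rightarrow> env \<Rightarrow> env \<Rightarrow> bool" where
  "env_compat k G D \<longleftrightarrow> (\<forall>j. pat_compat (G (k + Suc j)) (D j))"

definition pat_drop_linear :: "pat option \<Rightarrow> pat option" where
  "pat_drop_linear d = (if d \<in> {Some PL, Some PI} then None else d)"

definition env_drop_linear :: "env \<Rightarrow> env" where
  "env_drop_linear D = (\<lambda>y. pat_drop_linear (D y))"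

text \<open>An argument typed in \<open>DN\<close> may replace a variable with pattern \<open>p\<close> (\<open>None\<close> when the
  variable has been discarded by a box rule), contributing \<open>D\<close> to the resulting environment.\<close>

definition subst_arg :: "pat option \<Rightarrow> env \<Rightarrow> env \<Rightarrow> bool" where
  "subst_arg p DN D = (case p of
       None \<Rightarrow> nonlinear D
     | Some PL \<Rightarrow> DN = D
     | Some PH \<Rightarrow> DN = D \<and> nonlinear D
     | Some PI \<Rightarrow> DN = mi_env D \<and> (\<forall>y. D y \<noteq> Some PL)
     | Some PC \<Rightarrow> DN = mc_env D \<and> nonlinear D
     | Some PD \<Rightarrow> DN = D \<and> (\<forall>y. D y \<in> {None, Some PD}))"

lemma env_subst_push: "env_subst (Suc k) (push p G) D = push p (env_subst k G D)"
  by (rule ext) (auto simp: env_subst_def push_def split: nat.split)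

lemma env_compat_push: "env_compat (Suc k) (push p G) D = env_compat k G D"
  unfolding env_compat_def by simp

lemma env_compatD: "env_compat k G D \<Longrightarrow> \<not> i < k \<Longrightarrow> pat_compat (G (Suc i)) (D (i - k))"
  unfolding env_compat_def by (metis Suc_diff_Suc add_Suc_right add_diff_inverse_nat not_less_eq)

lemma pat_compat_box:
  assumes "pat_compat g d"
  shows "pat_compat (pat_mi g) (pat_mi d)" "pat_merge (pat_mi g) (pat_mi d) = pat_mi (pat_merge g d)"
    and "pat_compat (pat_mc g) (pat_mc d)" "pat_merge (pat_mc g) (pat_mc d) = pat_mc (pat_merge g d)"
  using assms
  by (cases g rule: pat_option_cases; cases d rule: pat_option_cases;
      simp add: pat_compat_def pat_merge_def pat_mi_def pat_mc_def)+

lemma env_compat_mi_env: "env_compat k G D \<Longrightarrow> env_compat k (mi_env G) (mi_env D)"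
  unfolding env_compat_def mi_env_apply using pat_compat_box(1) by blast

lemma env_compat_mc_env: "env_compat k G D \<Longrightarrow> env_compat k (mc_env G) (mc_env D)"
  unfolding env_compat_def mc_env_apply using pat_compat_box(3) by blast

lemma env_subst_mi_env: "env_compat k G D \<Longrightarrow> env_subst k (mi_env G) (mi_env D) = mi_env (env_subst k G D)"
  by (rule ext) (auto simp: env_subst_def mi_env_apply pat_compat_box(2) dest: env_compatD)

lemma env_subst_mc_env: "env_compat k G D \<Longrightarrow> env_subst k (mc_env G) (mc_env D) = mc_env (env_subst k G D)"
  by (rule ext) (auto simp: env_subst_def mc_env_apply pat_compat_box(4) dest: env_compatD)

lemma pat_split_merge:
  assumes "pat_split g g1 g2" "pat_compat g d"
  shows "pat_split (pat_merge g d) (pat_merge g1 d) (pat_merge g2 (pat_drop_linear d))"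
    and "pat_split (pat_merge g d) (pat_merge g1 (pat_drop_linear d)) (pat_merge g2 d)"
    and "d \<in> {None, Some PH, Some PC, Some PD} \<Longrightarrow> pat_split (pat_merge g d) (pat_merge g1 d) (pat_merge g2 d)"
    and "pat_compat g1 d" "pat_compat g2 d"
  using assms
  by (cases g rule: pat_option_cases; cases d rule: pat_option_cases;
      auto simp: pat_split_def pat_compat_def pat_merge_def pat_drop_linear_def)+

lemma nonlinear_drop_linear: "nonlinear (env_drop_linear D)"
  unfolding nonlinear_def env_drop_linear_def
proof
  fix y
  show "pat_drop_linear (D y) \<in> {None, Some PH, Some PC, Some PD}"
    by (cases "D y" rule: pat_option_cases) (auto simp: pat_drop_linear_def)
qed

lemma app_split_env_subst:
  assumes "app_split G G1 G2" "env_compat k G D"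
    and "(G1 k = G k \<and> D1 = D \<and> D2 = env_drop_linear D) \<or> (G2 k = G k \<and> D1 = env_drop_linear D \<and> D2 = D)
      \<or> (nonlinear D \<and> D1 = D \<and> D2 = D)"
  shows "app_split (env_subst k G D) (env_subst k G1 D1) (env_subst k G2 D2)"
  unfolding app_split_iff
proof
  fix i
  show "pat_split (env_subst k G D i) (env_subst k G1 D1 i) (env_subst k G2 D2 i)"
  proof (cases "i < k")
    case True then show ?thesis using assms(1) by (simp add: env_subst_def app_split_iff)
  next
    case False
    have "pat_split (G (Suc i)) (G1 (Suc i)) (G2 (Suc i))" using assms(1) by (simp add: app_split_iff)
    note merge = pat_split_merge[OF this env_compatD[OF assms(2) False]]
    from assms(3) show ?thesis
    proof (elim disjE conjE)
      assume "D1 = D" "D2 = env_drop_linear D"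
      then show ?thesis using merge(1) False by (simp add: env_subst_def env_drop_linear_def)
    next
      assume "D1 = env_drop_linear D" "D2 = D"
      then show ?thesis using merge(2) False by (simp add: env_subst_def env_drop_linear_def)
    next
      assume "nonlinear D" "D1 = D" "D2 = D"
      then show ?thesis using merge(3) False by (simp add: env_subst_def nonlinear_def)
    qed
  qed
qed

lemma env_compat_app_split:
  assumes "app_split G G1 G2" "env_compat k G D"
  shows "env_compat k G1 D" "env_compat k G2 D"
  using assms pat_split_merge(4,5) unfolding env_compat_def app_split_iff by blast+

lemma env_compat_drop_linear: "env_compat k G D \<Longrightarrow> env_compat k G (env_drop_linear D)"
  unfolding env_compat_def env_drop_linear_def pat_drop_linear_def pat_compat_def by auto

lemma discarded_nonlinear: "\<forall>y. D y \<in> {None, Some PD} \<Longrightarrow> nonlinear D"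
  unfolding nonlinear_def by blast

lemma subst_arg_nonlinear: "subst_arg p DN D \<Longrightarrow> p \<notin> {Some PL, Some PI} \<Longrightarrow> nonlinear D"
  by (cases p rule: pat_option_cases) (auto simp: subst_arg_def discarded_nonlinear)

lemma subst_arg_no_PL:
  assumes "subst_arg p DN D" "p \<noteq> Some PL"
  shows "D y \<noteq> Some PL"
proof (cases "p = Some PI")
  case True
  then show ?thesis using assms by (simp add: subst_arg_def)
next
  case False
  then have "nonlinear D" using assms subst_arg_nonlinear by blast
  then show ?thesis unfolding nonlinear_def by (auto dest: spec[of _ y])
qed

lemma pat_box_nonlinear:
  assumes "g \<in> {None, Some PH, Some PC, Some PD}"
  shows "pat_mi g \<in> {None, Some PH, Some PC, Some PD}" "pat_mc g \<in> {None, Some PD}"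
    and "pat_mc (pat_mi g) = pat_mc g"
  using assms by (auto simp: pat_mi_def pat_mc_def)

lemma pat_box_discarded:
  assumes "g \<in> {None, Some PD}"
  shows "pat_mi g = g" "pat_mc g = g"
  using assms by (auto simp: pat_mi_def pat_mc_def)

lemma subst_arg_mi_env:
  assumes "p \<noteq> Some PL" "subst_arg p DN D"
  shows "subst_arg (pat_mi p) DN (mi_env D)"
proof -
  have "nonlinear (mi_env D)" "mc_env (mi_env D) = mc_env D" if "nonlinear D"
    using that pat_box_nonlinear(1,3) unfolding nonlinear_def mi_env_apply mc_env_apply by auto
  moreover have "mi_env D = D" if "\<forall>y. D y \<in> {None, Some PD}"
    using that pat_box_discarded(1) unfolding mi_env_apply by auto
  ultimately show ?thesis
    using assms by (cases p rule: pat_option_cases) (auto simp: subst_arg_def pat_mi_def)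
qed

lemma subst_arg_mc_env:
  assumes "p \<in> {None, Some PH, Some PC, Some PD}" "subst_arg p DN D"
  shows "subst_arg (pat_mc p) DN (mc_env D)"
proof -
  have discarded: "\<forall>y. mc_env D y \<in> {None, Some PD}" if "nonlinear D"
    using that pat_box_nonlinear(2) unfolding nonlinear_def mc_env_apply by auto
  then have "nonlinear (mc_env D)" if "nonlinear D"
    using that unfolding nonlinear_def by blast
  moreover have "mc_env D = D" if "\<forall>y. D y \<in> {None, Some PD}"
    using that pat_box_discarded(2) unfolding mc_env_apply by auto
  ultimately show ?thesis
    using assms discarded by (cases p rule: pat_option_cases) (auto simp: subst_arg_def pat_mc_def)
qed

lemma env_weaker_lift_subst:
  assumes "\<forall>y. y \<noteq> k \<longrightarrow> G y \<in> {None, Some PH, Some PC, Some PD}" "env_compat k G D"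
  shows "env_weaker (env_lift 0 k D) (env_subst k G D)"
  unfolding env_weaker_def
proof
  fix i
  show "pat_weaker (env_lift 0 k D i) (env_subst k G D i)"
  proof (cases "i < k")
    case True
    then have "G i \<in> {None, Some PH, Some PC, Some PD}" using assms(1) by simp
    then show ?thesis using True by (auto simp: env_subst_def env_lift_def pat_weaker_def)
  next
    case False
    then have "G (Suc i) \<in> {None, Some PH, Some PC, Some PD}" using assms(1) by simp
    moreover have "pat_compat (G (Suc i)) (D (i - k))" using env_compatD[OF assms(2) False] .
    ultimately show ?thesis
      using False by (auto simp: env_subst_def env_lift_def pat_compat_def pat_merge_def pat_weaker_def)
  qed
qed

lemma pat_merge_no_PL: "g \<noteq> Some PL \<Longrightarrow> d \<noteq> Some PL \<Longrightarrow> pat_merge g d \<noteq> Some PL"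
  by (simp add: pat_merge_def)

lemma pat_merge_nonlinear:
  "g \<in> {None, Some PH, Some PC, Some PD} \<Longrightarrow> d \<in> {None, Some PH, Some PC, Some PD} \<Longrightarrow>
    pat_merge g d \<in> {None, Some PH, Some PC, Some PD}"
  by (simp add: pat_merge_def)

lemma ty_subst_Var:
  assumes "G x \<in> {Some PL, Some PH, Some PD}" "\<forall>y. y \<noteq> x \<longrightarrow> G y \<in> {None, Some PH, Some PC, Some PD}"
    and "substR k N (Var x) P" "subst_arg (G k) DN D" "G k \<noteq> None \<longrightarrow> ty DN N" "env_compat k G D"
  shows "ty (env_subst k G D) P"
proof (cases "x = k")
  case True
  then have "ty D N" using assms(1,4,5) by (auto simp: subst_arg_def)
  then have "ty (env_lift 0 k D) (lift 0 k N)" by (rule ty_lift)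
  moreover have "env_weaker (env_lift 0 k D) (env_subst k G D)"
    using env_weaker_lift_subst assms(2,6) True by blast
  ultimately show ?thesis using ty_weaken substR_VarD[OF assms(3)] True by auto
next
  case False
  then have "G k \<in> {None, Some PH, Some PC, Some PD}" using assms(2) by auto
  then have nonlinear: "nonlinear D" using subst_arg_nonlinear[OF assms(4)] by auto
  define x' where "x' = (if k < x then x - 1 else x)"
  have "tyI ty (env_subst k G D) (Var x')"
  proof (rule tyI.t_var)
    show "env_subst k G D x' \<in> {Some PL, Some PH, Some PD}"
      using assms(1) False by (auto simp: x'_def env_subst_def pat_merge_def)
    show "\<forall>y. y \<noteq> x' \<longrightarrow> env_subst k G D y \<in> {None, Some PH, Some PC, Some PD}"
    proof (intro allI impI)
      fix y assume "y \<noteq> x'"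
      show "env_subst k G D y \<in> {None, Some PH, Some PC, Some PD}"
      proof (cases "y < k")
        case True
        then have "y \<noteq> x" using \<open>y \<noteq> x'\<close> unfolding x'_def by (auto split: if_splits)
        then show ?thesis using True assms(2) by (simp add: env_subst_def)
      next
        case False
        then have "Suc y \<noteq> x"
          using \<open>y \<noteq> x'\<close> \<open>x \<noteq> k\<close> unfolding x'_def by (auto split: if_splits)
        then have "G (Suc y) \<in> {None, Some PH, Some PC, Some PD}" using assms(2) by blast
        moreover have "D (y - k) \<in> {None, Some PH, Some PC, Some PD}"
          using nonlinear unfolding nonlinear_def by blast
        ultimately show ?thesis
          using False pat_merge_nonlinear by (simp add: env_subst_def)
      qed
    qed
  qed
  then have "ty (env_subst k G D) (Var x')" by (rule tyI_ty)
  moreover have "P = Var x'" using substR_VarD[OF assms(3)] False by (simp add: x'_def)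
  ultimately show ?thesis by simp
qed

definition typed_subst :: "env \<Rightarrow> trm \<Rightarrow> bool" where
  "typed_subst T P \<longleftrightarrow> (\<exists>G M k N DN D. ty G M \<and> substR k N M P \<and> subst_arg (G k) DN D \<and>
      (G k \<noteq> None \<longrightarrow> ty DN N) \<and> env_compat k G D \<and> T = env_subst k G D)"

lemma tyI_subst:
  assumes "tyI ty G M" "substR k N M P" "subst_arg (G k) DN D" "G k \<noteq> None \<longrightarrow> ty DN N"
    and "env_compat k G D"
  shows "tyI (\<lambda>T P. typed_subst T P \<or> ty T P) (env_subst k G D) P"
  using assms
proof (induction arbitrary: k P D rule: tyI.induct)
  case (t_var G x)
  then show ?case
    by (intro tyI_mono_aux[OF ty_tyI[OF ty_subst_Var]]) blast+
next
  case (t_app G G1 G2 M1 M2)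
  obtain P1 P2 where P: "P = App P1 P2" "substR k N M1 P1" "substR k N M2 P2"
    using substR_AppD[OF t_app(6)] by blast
  have compat: "env_compat k G1 D" "env_compat k G2 D"
    using env_compat_app_split t_app(1,9) by blast+
  let ?R = "\<lambda>T P. typed_subst T P \<or> ty T P"
  have "pat_split (G k) (G1 k) (G2 k)" using t_app(1) by (simp add: app_split_iff)
  then show ?case
  proof (cases rule: pat_splitE)
    case left
    have "tyI ?R (env_subst k G1 D) P1"
      using t_app.IH(1)[OF P(2)] left t_app(7,8) compat by simp
    moreover have "tyI ?R (env_subst k G2 (env_drop_linear D)) P2"
      using t_app.IH(2)[OF P(3)] left compat env_compat_drop_linear nonlinear_drop_linear
      by (simp add: subst_arg_def)
    moreover have "app_split (env_subst k G D) (env_subst k G1 D) (env_subst k G2 (env_drop_linear D))"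
      using app_split_env_subst[OF t_app(1,9)] left by blast
    ultimately show ?thesis using P(1) by (blast intro: tyI.t_app)
  next
    case right
    have "tyI ?R (env_subst k G1 (env_drop_linear D)) P1"
      using t_app.IH(1)[OF P(2)] right compat env_compat_drop_linear nonlinear_drop_linear
      by (simp add: subst_arg_def)
    moreover have "tyI ?R (env_subst k G2 D) P2"
      using t_app.IH(2)[OF P(3)] right t_app(7,8) compat by simp
    moreover have "app_split (env_subst k G D) (env_subst k G1 (env_drop_linear D)) (env_subst k G2 D)"
      using app_split_env_subst[OF t_app(1,9)] right by blast
    ultimately show ?thesis using P(1) by (blast intro: tyI.t_app)
  next
    case shared
    have "tyI ?R (env_subst k G1 D) P1" "tyI ?R (env_subst k G2 D) P2"
      using t_app.IH(1)[OF P(2)] t_app.IH(2)[OF P(3)] shared t_app(7,8) compat by simp_all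
    moreover have "app_split (env_subst k G D) (env_subst k G1 D) (env_subst k G2 D)"
      using app_split_env_subst[OF t_app(1,9)] subst_arg_nonlinear t_app(7) shared by blast
    ultimately show ?thesis using P(1) by (blast intro: tyI.t_app)
  qed
next
  case (t_ll G M)
  obtain P1 where P: "P = Lam P1" "substR (Suc k) N M P1" using substR_LamD[OF t_ll(3)] by blast
  have "tyI (\<lambda>T P. typed_subst T P \<or> ty T P) (env_subst (Suc k) (push PL G) D) P1"
    using t_ll.IH[OF P(2)] t_ll(4,5,6) by (simp add: env_compat_push)
  then show ?case unfolding P env_subst_push by (rule tyI.t_ll)
next
  case (t_li1 G M)
  obtain P1 where P: "P = LamI P1" "substR (Suc k) N M P1" using substR_LamID[OF t_li1(3)] by blast
  have "tyI (\<lambda>T P. typed_subst T P \<or> ty T P) (env_subst (Suc k) (push PH G) D) P1"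
    using t_li1.IH[OF P(2)] t_li1(4,5,6) by (simp add: env_compat_push)
  then show ?case unfolding P env_subst_push by (rule tyI.t_li1)
next
  case (t_li2 G M)
  obtain P1 where P: "P = LamI P1" "substR (Suc k) N M P1" using substR_LamID[OF t_li2(3)] by blast
  have "tyI (\<lambda>T P. typed_subst T P \<or> ty T P) (env_subst (Suc k) (push PI G) D) P1"
    using t_li2.IH[OF P(2)] t_li2(4,5,6) by (simp add: env_compat_push)
  then show ?case unfolding P env_subst_push by (rule tyI.t_li2)
next
  case (t_lc G M)
  obtain P1 where P: "P = LamC P1" "substR (Suc k) N M P1" using substR_LamCD[OF t_lc(3)] by blast
  have "tyI (\<lambda>T P. typed_subst T P \<or> ty T P) (env_subst (Suc k) (push PC G) D) P1"
    using t_lc.IH[OF P(2)] t_lc(4,5,6) by (simp add: env_compat_push)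
  then show ?case unfolding P env_subst_push by (rule tyI.t_lc)
next
  case (t_mi G M)
  obtain P1 where P: "P = BoxI P1" "substR k N M P1" using substR_BoxID[OF t_mi(4)] by blast
  have no_PL: "G k \<noteq> Some PL" using t_mi(1) by blast
  have "subst_arg (mi_env G k) DN (mi_env D)"
    using subst_arg_mi_env[OF no_PL t_mi(5)] by (simp add: mi_env_apply)
  moreover have "mi_env G k \<noteq> None \<longrightarrow> ty DN N" using t_mi(6) by (auto simp: mi_env_def)
  ultimately have "tyI (\<lambda>T P. typed_subst T P \<or> ty T P) (env_subst k (mi_env G) (mi_env D)) P1"
    using t_mi.IH[OF P(2)] env_compat_mi_env[OF t_mi(7)] by blast
  then have "tyI (\<lambda>T P. typed_subst T P \<or> ty T P) (mi_env (env_subst k G D)) P1"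
    using env_subst_mi_env[OF t_mi(7)] by simp
  moreover have "\<forall>y. env_subst k G D y \<noteq> Some PL"
    using t_mi(1) subst_arg_no_PL[OF t_mi(5) no_PL] by (simp add: env_subst_def pat_merge_no_PL)
  ultimately show ?case unfolding P(1) by (blast intro: tyI.t_mi)
next
  case (t_mc G M)
  obtain P1 where P: "P = BoxC P1" "substR k N M P1" using substR_BoxCD[OF t_mc(3)] by blast
  have Gk: "G k \<in> {None, Some PH, Some PC, Some PD}" using t_mc(1) by blast
  have nonlinear: "nonlinear D" using subst_arg_nonlinear[OF t_mc(4)] Gk by auto
  have "\<forall>y. env_subst k G D y \<in> {None, Some PH, Some PC, Some PD}"
    using t_mc(1) nonlinear pat_merge_nonlinear by (simp add: env_subst_def nonlinear_def)
  moreover have "typed_subst (mc_env (env_subst k G D)) P1"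
    unfolding typed_subst_def
  proof (intro exI conjI)
    show "ty (mc_env G) M" by (rule t_mc(2))
    show "substR k N M P1" by (rule P(2))
    show "subst_arg (mc_env G k) DN (mc_env D)"
      using subst_arg_mc_env[OF Gk t_mc(4)] by (simp add: mc_env_apply)
    show "mc_env G k \<noteq> None \<longrightarrow> ty DN N" using t_mc(5) by (auto simp: mc_env_def)
    show "env_compat k (mc_env G) (mc_env D)" using env_compat_mc_env[OF t_mc(6)] .
    show "mc_env (env_subst k G D) = env_subst k (mc_env G) (mc_env D)"
      using env_subst_mc_env[OF t_mc(6)] by simp
  qed
  ultimately show ?case unfolding P(1) by (blast intro: tyI.t_mc)
qed

lemma ty_subst:
  assumes "ty G M" "substR k N M P" "subst_arg (G k) DN D" "G k \<noteq> None \<longrightarrow> ty DN N"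
    and "env_compat k G D"
  shows "ty (env_subst k G D) P"
proof (rule ty_coinduct_upto[where X = typed_subst])
  show "typed_subst (env_subst k G D) P" unfolding typed_subst_def using assms by blast
next
  fix T P assume "typed_subst T P"
  then obtain G M k N DN D where h: "ty G M" "substR k N M P" "subst_arg (G k) DN D"
      "G k \<noteq> None \<longrightarrow> ty DN N" "env_compat k G D" "T = env_subst k G D"
    unfolding typed_subst_def by blast
  show "tyI (\<lambda>T P. typed_subst T P \<or> ty T P) T P"
    unfolding h(6) by (rule tyI_subst[OF ty_tyI[OF h(1)] h(2-5)])
qed

section \<open>Subject reduction for reduction outside coinductive boxes\<close>

inductive ired :: "trm \<Rightarrow> trm \<Rightarrow> bool" where
  ired_basic: "basic M N \<Longrightarrow> ired M N"
| ired_appL: "ired M M' \<Longrightarrow> ired (App M N) (App M' N)"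
| ired_appR: "ired N N' \<Longrightarrow> ired (App M N) (App M N')"
| ired_lam: "ired M M' \<Longrightarrow> ired (Lam M) (Lam M')"
| ired_lamI: "ired M M' \<Longrightarrow> ired (LamI M) (LamI M')"
| ired_lamC: "ired M M' \<Longrightarrow> ired (LamC M) (LamC M')"
| ired_boxI: "ired M M' \<Longrightarrow> ired (BoxI M) (BoxI M')"

lemma ired_step: "ired M N \<Longrightarrow> step M N"
  by (induction rule: ired.induct) (auto intro: step.intros)

lemma ireds_steps: "ired\<^sup>*\<^sup>* M N \<Longrightarrow> step\<^sup>*\<^sup>* M N"
  by (induction rule: rtranclp_induct) (auto intro: rtranclp.rtrancl_into_rtrancl ired_step)

text \<open>Contracting \<open>(\<lambda>\<down>x. M) (\<down>N)\<close> where \<open>x\<close> carries \<open>#x\<close> may duplicate \<open>N\<close>, so the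
  patterns \<open>\<down>y\<close> of \<open>N\<close> have to become \<open>#y\<close>.\<close>

definition pat_marked :: "pat option \<Rightarrow> pat option \<Rightarrow> bool" where
  "pat_marked g g' \<longleftrightarrow> g' = g \<or> (g = Some PI \<and> g' = Some PH)"

definition env_marked :: "env \<Rightarrow> env \<Rightarrow> bool" where
  "env_marked G G' \<longleftrightarrow> (\<forall>y. pat_marked (G y) (G' y))"

lemma env_marked_refl: "env_marked G G"
  unfolding env_marked_def pat_marked_def by simp

lemma env_marked_trans: "env_marked G G' \<Longrightarrow> env_marked G' G'' \<Longrightarrow> env_marked G G''"
  unfolding env_marked_def pat_marked_def by (metis option.inject pat.distinct(15))

lemma dom_env_marked: "env_marked G G' \<Longrightarrow> dom G' = dom G"
  unfolding env_marked_def pat_marked_def dom_def by (metis option.distinct(1))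

lemma env_marked_no_PI: "\<forall>y. G y \<noteq> Some PI \<Longrightarrow> env_marked G G' \<Longrightarrow> G' = G"
  unfolding env_marked_def pat_marked_def by auto

lemma env_marked_mi_env: "env_marked (mi_env G) G' \<Longrightarrow> G' = mi_env G"
  by (rule env_marked_no_PI) (auto simp: mi_env_apply pat_mi_def split: option.splits pat.splits)

lemma env_marked_push:
  assumes "env_marked (push p G) G'"
  shows "env_marked G (\<lambda>j. G' (Suc j))"
    and "G' = push p (\<lambda>j. G' (Suc j)) \<or> (p = PI \<and> G' = push PH (\<lambda>j. G' (Suc j)))"
proof -
  have marked: "pat_marked (push p G y) (G' y)" for y
    using assms unfolding env_marked_def by blast
  show "env_marked G (\<lambda>j. G' (Suc j))"
    unfolding env_marked_def
  proof
    fix j show "pat_marked (G j) (G' (Suc j))" using marked[of "Suc j"] by simp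
  qed
  show "G' = push p (\<lambda>j. G' (Suc j)) \<or> (p = PI \<and> G' = push PH (\<lambda>j. G' (Suc j)))"
    using marked[of 0] push_tail unfolding pat_marked_def by auto
qed

lemma tyI_marked_push:
  assumes "env_marked (push p G) G''" "tyI R G'' M"
  shows "\<exists>G'. env_marked G G' \<and> (tyI R (push p G') M \<or> (p = PI \<and> tyI R (push PH G') M))"
proof -
  let ?G' = "\<lambda>j. G'' (Suc j)"
  have "G'' = push p ?G' \<or> (p = PI \<and> G'' = push PH ?G')" by (rule env_marked_push(2)[OF assms(1)])
  then have "tyI R (push p ?G') M \<or> (p = PI \<and> tyI R (push PH ?G') M)"
    using assms(2) by metis
  then show ?thesis using env_marked_push(1)[OF assms(1)] by blast
qed

lemma env_subst_push_app_split:
  assumes "app_split G G1 G2"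
  shows "env_compat 0 (push p G1) G2" "env_subst 0 (push p G1) G2 = G"
proof -
  have split: "pat_split (G j) (G1 j) (G2 j)" for j
    using assms by (simp add: app_split_iff)
  show "env_compat 0 (push p G1) G2"
    unfolding env_compat_def
  proof
    fix j
    from split[of j] show "pat_compat (push p G1 (0 + Suc j)) (G2 j)"
      by (cases rule: pat_splitE; cases "G j" rule: pat_option_cases) (auto simp: pat_compat_def)
  qed
  show "env_subst 0 (push p G1) G2 = G"
  proof
    fix j
    from split[of j] show "env_subst 0 (push p G1) G2 j = G j"
      by (cases rule: pat_splitE) (auto simp: env_subst_def pat_merge_def)
  qed
qed

lemma ty_subst_boxI_hash:
  assumes "app_split G G1 G2" "ty (push PH G1) A" "\<forall>y. G2 y \<noteq> Some PL" "ty (mi_env G2) N"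
    and "substR 0 N A M'"
  shows "\<exists>G'. env_marked G G' \<and> ty G' M'"
proof -
  define D where "D = (\<lambda>y. if G2 y = Some PI then Some PH else G2 y)"
  have split: "pat_split (G j) (G1 j) (G2 j)" for j
    using assms(1) by (simp add: app_split_iff)
  have "env_weaker (mi_env G2) D"
    unfolding env_weaker_def
  proof
    fix y show "pat_weaker (mi_env G2 y) (D y)"
      using assms(3) by (cases "G2 y" rule: pat_option_cases)
        (auto simp: D_def mi_env_apply pat_mi_def pat_weaker_def)
  qed
  then have "ty D N" using ty_weaken assms(4) by blast
  moreover have "nonlinear D"
    unfolding nonlinear_def
  proof
    fix y show "D y \<in> {None, Some PH, Some PC, Some PD}"
      using assms(3) by (cases "G2 y" rule: pat_option_cases) (auto simp: D_def)
  qed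
  moreover have "env_compat 0 (push PH G1) D"
    unfolding env_compat_def
  proof
    fix j
    from split[of j] show "pat_compat (push PH G1 (0 + Suc j)) (D j)"
      by (cases rule: pat_splitE; cases "G j" rule: pat_option_cases) (auto simp: pat_compat_def D_def)
  qed
  ultimately have "ty (env_subst 0 (push PH G1) D) M'"
    using ty_subst[OF assms(2) assms(5), where DN = D] by (simp add: subst_arg_def)
  moreover have "env_marked G (env_subst 0 (push PH G1) D)"
    unfolding env_marked_def
  proof
    fix j
    from split[of j] show "pat_marked (G j) (env_subst 0 (push PH G1) D j)"
      by (cases rule: pat_splitE; cases "G j" rule: pat_option_cases)
        (auto simp: pat_marked_def env_subst_def pat_merge_def D_def)
  qed
  ultimately show ?thesis by blast
qed

lemma basic_subject_reduction:
  assumes "basic M M'" "tyI ty G M"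
  shows "\<exists>G'. env_marked G G' \<and> ty G' M'"
  using assms(1)
proof cases
  case (b_lin N A)
  obtain G1 G2 where h: "app_split G G1 G2" "tyI ty G1 (Lam A)" "tyI ty G2 N"
    using tyI_AppD assms(2) b_lin(1) by blast
  have "ty (env_subst 0 (push PL G1) G2) M'"
    by (rule ty_subst[OF tyI_ty[OF tyI_LamD[OF h(2)]] b_lin(2), where DN = G2])
      (auto simp: subst_arg_def env_subst_push_app_split[OF h(1)] tyI_ty[OF h(3)])
  then show ?thesis using env_subst_push_app_split[OF h(1)] env_marked_refl by auto
next
  case (b_coi N A)
  obtain G1 G2 where h: "app_split G G1 G2" "tyI ty G1 (LamC A)" "tyI ty G2 (BoxC N)"
    using tyI_AppD assms(2) b_coi(1) by blast
  have arg: "nonlinear G2" "ty (mc_env G2) N" using tyI_BoxCD[OF h(3)] by blast+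
  have "ty (env_subst 0 (push PC G1) G2) M'"
    by (rule ty_subst[OF tyI_ty[OF tyI_LamCD[OF h(2)]] b_coi(2), where DN = "mc_env G2"])
      (auto simp: subst_arg_def env_subst_push_app_split[OF h(1)] arg)
  then show ?thesis using env_subst_push_app_split[OF h(1)] env_marked_refl by auto
next
  case (b_ind N A)
  obtain G1 G2 where h: "app_split G G1 G2" "tyI ty G1 (LamI A)" "tyI ty G2 (BoxI N)"
    using tyI_AppD assms(2) b_ind(1) by blast
  have arg: "\<forall>y. G2 y \<noteq> Some PL" "ty (mi_env G2) N" using tyI_BoxID[OF h(3)] tyI_ty by blast+
  from tyI_LamID[OF h(2)] show ?thesis
  proof
    assume l: "tyI ty (push PI G1) A"
    have "ty (env_subst 0 (push PI G1) G2) M'"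
      by (rule ty_subst[OF tyI_ty[OF l] b_ind(2), where DN = "mi_env G2"])
        (auto simp: subst_arg_def env_subst_push_app_split[OF h(1)] arg)
    then show ?thesis using env_subst_push_app_split[OF h(1)] env_marked_refl by auto
  next
    assume "tyI ty (push PH G1) A"
    from ty_subst_boxI_hash[OF h(1) tyI_ty[OF this] arg b_ind(2)] show ?thesis .
  qed
qed

lemma app_split_marked:
  assumes "app_split G G1 G2" "env_marked G1 G1'" "tyI ty G2 N"
  shows "\<exists>G' G2'. env_marked G G' \<and> app_split G' G1' G2' \<and> tyI ty G2' N"
proof -
  define G' where "G' = (\<lambda>y. if G1' y \<noteq> G1 y then Some PH else G y)"
  define G2' where "G2' = (\<lambda>y. if G1' y \<noteq> G1 y then Some PH else G2 y)"
  have split: "pat_split (G y) (G1 y) (G2 y)" and marked: "pat_marked (G1 y) (G1' y)" for y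
    using assms(1,2) unfolding app_split_iff env_marked_def by blast+
  have "pat_marked (G y) (G' y) \<and> pat_split (G' y) (G1' y) (G2' y) \<and> pat_weaker (G2 y) (G2' y)" for y
    using split[of y] marked[of y]
    by (cases rule: pat_splitE; cases "G y" rule: pat_option_cases)
      (auto simp: G'_def G2'_def pat_marked_def pat_split_def pat_weaker_def)
  then have "env_marked G G'" "app_split G' G1' G2'" "env_weaker G2 G2'"
    unfolding env_marked_def app_split_iff env_weaker_def by blast+
  moreover from this(3) have "tyI ty G2' N" using ty_weaken tyI_ty[OF assms(3)] ty_tyI by blast
  ultimately show ?thesis by blast
qed

lemma ired_subject_reduction:
  assumes "ired M M'" "tyI ty G M"
  shows "\<exists>G'. env_marked G G' \<and> tyI ty G' M'"
  using assms
proof (induction arbitrary: G rule: ired.induct)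
  case (ired_basic M N)
  then show ?case using basic_subject_reduction ty_tyI by blast
next
  case (ired_appL M M' N)
  obtain G1 G2 where h: "app_split G G1 G2" "tyI ty G1 M" "tyI ty G2 N"
    using tyI_AppD[OF ired_appL(3)] by blast
  obtain G1' where "env_marked G1 G1'" "tyI ty G1' M'" using ired_appL.IH[OF h(2)] by blast
  moreover obtain G' G2' where "env_marked G G'" "app_split G' G1' G2'" "tyI ty G2' N"
    using app_split_marked[OF h(1) \<open>env_marked G1 G1'\<close> h(3)] by blast
  ultimately show ?case by (blast intro: tyI.t_app)
next
  case (ired_appR N N' M)
  obtain G1 G2 where h: "app_split G G1 G2" "tyI ty G1 M" "tyI ty G2 N"
    using tyI_AppD[OF ired_appR(3)] by blast
  obtain G2' where "env_marked G2 G2'" "tyI ty G2' N'" using ired_appR.IH[OF h(3)] by blast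
  moreover obtain G' G1' where "env_marked G G'" "app_split G' G2' G1'" "tyI ty G1' M"
    using app_split_marked[OF app_split_sym[OF h(1)] \<open>env_marked G2 G2'\<close> h(2)] by blast
  ultimately show ?case by (blast intro: tyI.t_app app_split_sym)
next
  case (ired_lam M M')
  obtain G'' where "env_marked (push PL G) G''" "tyI ty G'' M'"
    using ired_lam.IH[OF tyI_LamD[OF ired_lam(3)]] by blast
  from tyI_marked_push[OF this] show ?case by (auto intro: tyI.t_ll)
next
  case (ired_lamC M M')
  obtain G'' where "env_marked (push PC G) G''" "tyI ty G'' M'"
    using ired_lamC.IH[OF tyI_LamCD[OF ired_lamC(3)]] by blast
  from tyI_marked_push[OF this] show ?case by (auto intro: tyI.t_lc)
next
  case (ired_lamI M M')
  from tyI_LamID[OF ired_lamI(3)] show ?case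
  proof
    assume "tyI ty (push PH G) M"
    then obtain G'' where "env_marked (push PH G) G''" "tyI ty G'' M'"
      using ired_lamI.IH by blast
    from tyI_marked_push[OF this] show ?case by (auto intro: tyI.t_li1)
  next
    assume "tyI ty (push PI G) M"
    then obtain G'' where "env_marked (push PI G) G''" "tyI ty G'' M'"
      using ired_lamI.IH by blast
    from tyI_marked_push[OF this] show ?case by (auto intro: tyI.t_li1 tyI.t_li2)
  qed
next
  case (ired_boxI M M')
  have b: "\<forall>y. G y \<noteq> Some PL" "tyI ty (mi_env G) M" using tyI_BoxID[OF ired_boxI(3)] by blast+
  obtain G'' where "env_marked (mi_env G) G''" "tyI ty G'' M'" using ired_boxI.IH[OF b(2)] by blast
  then have "tyI ty (mi_env G) M'" using env_marked_mi_env by blast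
  then show ?case using b(1) env_marked_refl by (blast intro: tyI.t_mi)
qed

lemma ireds_subject_reduction: "ired\<^sup>*\<^sup>* M P \<Longrightarrow> ty G M \<Longrightarrow> \<exists>G'. env_marked G G' \<and> ty G' P"
proof (induction rule: rtranclp_induct)
  case base
  then show ?case using env_marked_refl by blast
next
  case (step P Q)
  then obtain G' where "env_marked G G'" "ty G' P" by blast
  moreover obtain G'' where "env_marked G' G''" "tyI ty G'' Q"
    using ired_subject_reduction[OF step(2) ty_tyI[OF \<open>ty G' P\<close>]] by blast
  ultimately show ?case using env_marked_trans tyI_ty by blast
qed

section \<open>Termination of reduction outside coinductive boxes\<close>

text \<open>\<open>node_depths M A\<close>: \<open>A\<close> is the multiset of the \<open>\<down>\<close>-nesting depths of the nodes of \<open>M\<close>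
  outside coinductive boxes, an \<open>\<up>\<close>-box counting as a leaf. Typable terms have finite
  inductive part, hence such an \<open>A\<close>.\<close>

inductive node_depths :: "trm \<Rightarrow> nat multiset \<Rightarrow> bool" where
  nd_var: "node_depths (Var i) {#0#}"
| nd_app: "node_depths a A \<Longrightarrow> node_depths b B \<Longrightarrow> node_depths (App a b) (add_mset 0 (A + B))"
| nd_lam: "node_depths a A \<Longrightarrow> node_depths (Lam a) (add_mset 0 A)"
| nd_lamI: "node_depths a A \<Longrightarrow> node_depths (LamI a) (add_mset 0 A)"
| nd_lamC: "node_depths a A \<Longrightarrow> node_depths (LamC a) (add_mset 0 A)"
| nd_boxI: "node_depths a A \<Longrightarrow> node_depths (BoxI a) (add_mset 0 (image_mset Suc A))"
| nd_boxC: "node_depths (BoxC a) {#0#}"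

inductive_cases node_depths_VarE: "node_depths (Var i) A"
inductive_cases node_depths_AppE: "node_depths (App a b) A"
inductive_cases node_depths_LamE: "node_depths (Lam a) A"
inductive_cases node_depths_LamIE: "node_depths (LamI a) A"
inductive_cases node_depths_LamCE: "node_depths (LamC a) A"
inductive_cases node_depths_BoxIE: "node_depths (BoxI a) A"
inductive_cases node_depths_BoxCE: "node_depths (BoxC a) A"

lemma tyI_node_depths: "tyI R G M \<Longrightarrow> \<exists>A. node_depths M A"
  by (induction rule: tyI.induct) (auto intro: node_depths.intros)

lemma node_depths_lift: "node_depths N B \<Longrightarrow> node_depths (lift c n N) B"
  by (induction arbitrary: c rule: node_depths.induct) (auto intro: node_depths.intros)

text \<open>The following predicates ignore the inside of coinductive boxes, which may be infinite.\<close>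

inductive absent :: "nat \<Rightarrow> trm \<Rightarrow> bool" where
  absent_var: "i \<noteq> k \<Longrightarrow> absent k (Var i)"
| absent_app: "absent k a \<Longrightarrow> absent k b \<Longrightarrow> absent k (App a b)"
| absent_lam: "absent (Suc k) a \<Longrightarrow> absent k (Lam a)"
| absent_lamI: "absent (Suc k) a \<Longrightarrow> absent k (LamI a)"
| absent_lamC: "absent (Suc k) a \<Longrightarrow> absent k (LamC a)"
| absent_boxI: "absent k a \<Longrightarrow> absent k (BoxI a)"
| absent_boxC: "absent k (BoxC a)"

inductive occurs_unboxed :: "nat \<Rightarrow> trm \<Rightarrow> nat \<Rightarrow> bool" where
  ou_var_eq: "occurs_unboxed k (Var k) 1"
| ou_var_neq: "i \<noteq> k \<Longrightarrow> occurs_unboxed k (Var i) 0"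
| ou_app: "occurs_unboxed k a n \<Longrightarrow> occurs_unboxed k b m \<Longrightarrow> occurs_unboxed k (App a b) (n + m)"
| ou_lam: "occurs_unboxed (Suc k) a n \<Longrightarrow> occurs_unboxed k (Lam a) n"
| ou_lamI: "occurs_unboxed (Suc k) a n \<Longrightarrow> occurs_unboxed k (LamI a) n"
| ou_lamC: "occurs_unboxed (Suc k) a n \<Longrightarrow> occurs_unboxed k (LamC a) n"
| ou_boxI: "absent k a \<Longrightarrow> occurs_unboxed k (BoxI a) 0"
| ou_boxC: "occurs_unboxed k (BoxC a) 0"

inductive occurs_once_boxed :: "nat \<Rightarrow> trm \<Rightarrow> bool" where
  ob_appL: "occurs_once_boxed k a \<Longrightarrow> absent k b \<Longrightarrow> occurs_once_boxed k (App a b)"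
| ob_appR: "absent k a \<Longrightarrow> occurs_once_boxed k b \<Longrightarrow> occurs_once_boxed k (App a b)"
| ob_lam: "occurs_once_boxed (Suc k) a \<Longrightarrow> occurs_once_boxed k (Lam a)"
| ob_lamI: "occurs_once_boxed (Suc k) a \<Longrightarrow> occurs_once_boxed k (LamI a)"
| ob_lamC: "occurs_once_boxed (Suc k) a \<Longrightarrow> occurs_once_boxed k (LamC a)"
| ob_boxI: "occurs_unboxed k a 1 \<Longrightarrow> occurs_once_boxed k (BoxI a)"

lemma absent_occurs_unboxed: "absent k M \<Longrightarrow> occurs_unboxed k M 0"
proof (induction rule: absent.induct)
  case (absent_app k a b)
  then show ?case using ou_app[of k a 0 b 0] by simp
qed (auto intro: occurs_unboxed.intros)

lemma tyI_absent: "tyI R G M \<Longrightarrow> G k \<in> {None, Some PC} \<Longrightarrow> absent k M"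
proof (induction arbitrary: k rule: tyI.induct)
  case (t_app G G1 G2 M N)
  then have "G1 k = G k" "G2 k = G k" by (auto simp: app_split_def)
  then show ?case using t_app by (auto intro: absent.intros)
qed (auto intro: absent.intros simp: mi_env_def)

lemma tyI_occurs_unboxed_PL: "tyI R G M \<Longrightarrow> G k = Some PL \<Longrightarrow> occurs_unboxed k M 1"
proof (induction arbitrary: k rule: tyI.induct)
  case (t_var G x)
  then have "x = k" by (cases "x = k") auto
  then show ?case using ou_var_eq by simp
next
  case (t_app G G1 G2 M N)
  have "pat_split (G k) (G1 k) (G2 k)" using t_app(1) by (simp add: app_split_iff)
  then show ?case
  proof (cases rule: pat_splitE)
    case left
    then have "occurs_unboxed k M 1" "occurs_unboxed k N 0"
      using t_app absent_occurs_unboxed tyI_absent by auto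
    then show ?thesis using ou_app[of k M 1 N 0] by simp
  next
    case right
    then have "occurs_unboxed k M 0" "occurs_unboxed k N 1"
      using t_app absent_occurs_unboxed tyI_absent by auto
    then show ?thesis using ou_app[of k M 0 N 1] by simp
  next
    case shared
    then show ?thesis using t_app by simp
  qed
next
  case (t_mc G M)
  then show ?case using t_mc(1)[rule_format, of k] by simp
qed (auto intro: occurs_unboxed.intros)

lemma tyI_occurs_unboxed_PH: "tyI R G M \<Longrightarrow> G k = Some PH \<Longrightarrow> \<exists>n. occurs_unboxed k M n"
proof (induction arbitrary: k rule: tyI.induct)
  case (t_var G x)
  then show ?case by (cases "x = k") (auto intro: occurs_unboxed.intros)
next
  case (t_app G G1 G2 M N)
  then have "G1 k = G k" "G2 k = G k" by (auto simp: app_split_def)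
  then obtain n m where "occurs_unboxed k M n" "occurs_unboxed k N m" using t_app by force
  then show ?case by (blast intro: ou_app)
next
  case (t_mi G M)
  then have "absent k M" using tyI_absent[OF t_mi(2), of k] by (simp add: mi_env_def)
  then show ?case by (auto intro: ou_boxI)
qed (force intro: occurs_unboxed.intros)+

lemma tyI_occurs_once_boxed: "tyI R G M \<Longrightarrow> G k = Some PI \<Longrightarrow> occurs_once_boxed k M"
proof (induction arbitrary: k rule: tyI.induct)
  case (t_var G x)
  then show ?case by (cases "x = k") auto
next
  case (t_app G G1 G2 M N)
  have "pat_split (G k) (G1 k) (G2 k)" using t_app(1) by (simp add: app_split_iff)
  then show ?case
    by (cases rule: pat_splitE) (use t_app tyI_absent in \<open>auto intro: occurs_once_boxed.intros\<close>)
next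
  case (t_mi G M)
  then have "occurs_unboxed k M 1" using tyI_occurs_unboxed_PL[OF t_mi(2), of k] by (simp add: mi_env_def)
  then show ?case by (rule ob_boxI)
next
  case (t_mc G M)
  then show ?case using t_mc(1)[rule_format, of k] by simp
qed (auto intro: occurs_once_boxed.intros)

lemma node_depths_subst_absent:
  "absent k M \<Longrightarrow> node_depths M A \<Longrightarrow> substR k N M P \<Longrightarrow> node_depths P A"
proof (induction arbitrary: A P rule: absent.induct)
  case (absent_var i k)
  have "A = {#0#}" using absent_var(2) by (rule node_depths_VarE)
  moreover have "\<exists>j. P = Var j" using substR_VarD[OF absent_var(3)] absent_var(1) by simp
  ultimately show ?case by (auto intro: nd_var)
next
  case (absent_app k a b)
  obtain P1 P2 where P: "P = App P1 P2" "substR k N a P1" "substR k N b P2"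
    using substR_AppD[OF absent_app(6)] by blast
  obtain A1 A2 where A: "A = add_mset 0 (A1 + A2)" "node_depths a A1" "node_depths b A2"
    using absent_app(5) by (rule node_depths_AppE)
  show ?case unfolding P(1) A(1) by (rule nd_app[OF absent_app.IH(1)[OF A(2) P(2)] absent_app.IH(2)[OF A(3) P(3)]])
next
  case (absent_lam k a)
  obtain P1 where P: "P = Lam P1" "substR (Suc k) N a P1" using substR_LamD[OF absent_lam(4)] by blast
  obtain A1 where A: "A = add_mset 0 A1" "node_depths a A1" using absent_lam(3) by (rule node_depths_LamE)
  show ?case unfolding P(1) A(1) by (rule nd_lam[OF absent_lam.IH[OF A(2) P(2)]])
next
  case (absent_lamI k a)
  obtain P1 where P: "P = LamI P1" "substR (Suc k) N a P1" using substR_LamID[OF absent_lamI(4)] by blast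
  obtain A1 where A: "A = add_mset 0 A1" "node_depths a A1" using absent_lamI(3) by (rule node_depths_LamIE)
  show ?case unfolding P(1) A(1) by (rule nd_lamI[OF absent_lamI.IH[OF A(2) P(2)]])
next
  case (absent_lamC k a)
  obtain P1 where P: "P = LamC P1" "substR (Suc k) N a P1" using substR_LamCD[OF absent_lamC(4)] by blast
  obtain A1 where A: "A = add_mset 0 A1" "node_depths a A1" using absent_lamC(3) by (rule node_depths_LamCE)
  show ?case unfolding P(1) A(1) by (rule nd_lamC[OF absent_lamC.IH[OF A(2) P(2)]])
next
  case (absent_boxI k a)
  obtain P1 where P: "P = BoxI P1" "substR k N a P1" using substR_BoxID[OF absent_boxI(4)] by blast
  obtain A1 where A: "A = add_mset 0 (image_mset Suc A1)" "node_depths a A1"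
    using absent_boxI(3) by (rule node_depths_BoxIE)
  show ?case unfolding P(1) A(1) by (rule nd_boxI[OF absent_boxI.IH[OF A(2) P(2)]])
next
  case (absent_boxC k a)
  obtain P1 where "P = BoxC P1" using substR_BoxCD[OF absent_boxC(2)] by blast
  moreover have "A = {#0#}" using absent_boxC(1) by (rule node_depths_BoxCE)
  ultimately show ?case by (simp add: nd_boxC)
qed

lemma replicate_mset_add: "replicate_mset (m + n) x = replicate_mset m x + replicate_mset n x"
  by (induction m) auto

text \<open>Each of the \<open>n\<close> unboxed occurrences, a leaf of depth \<open>0\<close>, is replaced by a copy of
  the depths \<open>B\<close> of the argument.\<close>

lemma node_depths_subst_unboxed:
  "occurs_unboxed k M n \<Longrightarrow> node_depths M A \<Longrightarrow> node_depths N B \<Longrightarrow> substR k N M P \<Longrightarrow>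
   \<exists>A0. A = A0 + replicate_mset n 0 \<and> node_depths P (A0 + repeat_mset n B)"
proof (induction arbitrary: A P rule: occurs_unboxed.induct)
  case (ou_var_eq k)
  have "A = {#0#}" using ou_var_eq(1) by (rule node_depths_VarE)
  moreover have "P = lift 0 k N" using substR_VarD[OF ou_var_eq(3)] by simp
  ultimately show ?case using node_depths_lift[OF ou_var_eq(2)] by (intro exI[of _ "{#}"]) simp
next
  case (ou_var_neq i k)
  have "A = {#0#}" using ou_var_neq(2) by (rule node_depths_VarE)
  moreover have "\<exists>j. P = Var j" using substR_VarD[OF ou_var_neq(4)] ou_var_neq(1) by simp
  ultimately show ?case by (auto intro: nd_var)
next
  case (ou_app k a n b m)
  obtain P1 P2 where P: "P = App P1 P2" "substR k N a P1" "substR k N b P2"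
    using substR_AppD[OF ou_app(7)] by blast
  obtain A1 A2 where A: "A = add_mset 0 (A1 + A2)" "node_depths a A1" "node_depths b A2"
    using ou_app(5) by (auto elim: node_depths_AppE)
  obtain A01 where 1: "A1 = A01 + replicate_mset n 0" "node_depths P1 (A01 + repeat_mset n B)"
    using ou_app.IH(1)[OF A(2) ou_app(6) P(2)] by blast
  obtain A02 where 2: "A2 = A02 + replicate_mset m 0" "node_depths P2 (A02 + repeat_mset m B)"
    using ou_app.IH(2)[OF A(3) ou_app(6) P(3)] by blast
  have "node_depths P (add_mset 0 ((A01 + repeat_mset n B) + (A02 + repeat_mset m B)))"
    using P(1) 1 2 by (auto intro: nd_app)
  then show ?case using A(1) 1(1) 2(1)
    by (intro exI[of _ "add_mset 0 (A01 + A02)"]) (simp add: repeat_mset_distrib replicate_mset_add ac_simps)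
next
  case (ou_lam k a n)
  obtain P1 where P: "P = Lam P1" "substR (Suc k) N a P1" using substR_LamD[OF ou_lam(5)] by blast
  obtain A1 where A: "A = add_mset 0 A1" "node_depths a A1" using ou_lam(3) by (auto elim: node_depths_LamE)
  obtain A01 where "A1 = A01 + replicate_mset n 0" "node_depths P1 (A01 + repeat_mset n B)"
    using ou_lam.IH[OF A(2) ou_lam(4) P(2)] by blast
  then show ?case using A P by (intro exI[of _ "add_mset 0 A01"]) (auto intro: nd_lam)
next
  case (ou_lamI k a n)
  obtain P1 where P: "P = LamI P1" "substR (Suc k) N a P1" using substR_LamID[OF ou_lamI(5)] by blast
  obtain A1 where A: "A = add_mset 0 A1" "node_depths a A1" using ou_lamI(3) by (auto elim: node_depths_LamIE)
  obtain A01 where "A1 = A01 + replicate_mset n 0" "node_depths P1 (A01 + repeat_mset n B)"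
    using ou_lamI.IH[OF A(2) ou_lamI(4) P(2)] by blast
  then show ?case using A P by (intro exI[of _ "add_mset 0 A01"]) (auto intro: nd_lamI)
next
  case (ou_lamC k a n)
  obtain P1 where P: "P = LamC P1" "substR (Suc k) N a P1" using substR_LamCD[OF ou_lamC(5)] by blast
  obtain A1 where A: "A = add_mset 0 A1" "node_depths a A1" using ou_lamC(3) by (auto elim: node_depths_LamCE)
  obtain A01 where "A1 = A01 + replicate_mset n 0" "node_depths P1 (A01 + repeat_mset n B)"
    using ou_lamC.IH[OF A(2) ou_lamC(4) P(2)] by blast
  then show ?case using A P by (intro exI[of _ "add_mset 0 A01"]) (auto intro: nd_lamC)
next
  case (ou_boxI k a)
  then have "node_depths P A" using node_depths_subst_absent[OF _ ou_boxI(2)] absent_boxI by blast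
  then show ?case by simp
next
  case (ou_boxC k a)
  obtain P1 where "P = BoxC P1" using substR_BoxCD[OF ou_boxC(3)] by blast
  moreover have "A = {#0#}" using ou_boxC(1) by (rule node_depths_BoxCE)
  ultimately show ?case by (simp add: nd_boxC)
qed

lemma node_depths_subst_boxed_once:
  "occurs_once_boxed k M \<Longrightarrow> node_depths M A \<Longrightarrow> node_depths N B \<Longrightarrow> substR k N M P \<Longrightarrow>
   \<exists>A0. A = add_mset 1 A0 \<and> node_depths P (A0 + image_mset Suc B)"
proof (induction arbitrary: A P rule: occurs_once_boxed.induct)
  case (ob_appL k a b)
  obtain P1 P2 where P: "P = App P1 P2" "substR k N a P1" "substR k N b P2"
    using substR_AppD[OF ob_appL(6)] by blast
  obtain A1 A2 where A: "A = add_mset 0 (A1 + A2)" "node_depths a A1" "node_depths b A2"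
    using ob_appL(4) by (auto elim: node_depths_AppE)
  obtain A01 where 1: "A1 = add_mset 1 A01" "node_depths P1 (A01 + image_mset Suc B)"
    using ob_appL.IH[OF A(2) ob_appL(5) P(2)] by blast
  have "node_depths P2 A2" using node_depths_subst_absent[OF ob_appL(2) A(3) P(3)] .
  then have "node_depths P (add_mset 0 ((A01 + image_mset Suc B) + A2))" using P(1) 1 by (auto intro: nd_app)
  then show ?case using A(1) 1(1) by (intro exI[of _ "add_mset 0 (A01 + A2)"]) (simp add: ac_simps)
next
  case (ob_appR k a b)
  obtain P1 P2 where P: "P = App P1 P2" "substR k N a P1" "substR k N b P2"
    using substR_AppD[OF ob_appR(6)] by blast
  obtain A1 A2 where A: "A = add_mset 0 (A1 + A2)" "node_depths a A1" "node_depths b A2"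
    using ob_appR(4) by (auto elim: node_depths_AppE)
  obtain A02 where 2: "A2 = add_mset 1 A02" "node_depths P2 (A02 + image_mset Suc B)"
    using ob_appR.IH[OF A(3) ob_appR(5) P(3)] by blast
  have "node_depths P1 A1" using node_depths_subst_absent[OF ob_appR(1) A(2) P(2)] .
  then have "node_depths P (add_mset 0 (A1 + (A02 + image_mset Suc B)))" using P(1) 2 by (auto intro: nd_app)
  then show ?case using A(1) 2(1) by (intro exI[of _ "add_mset 0 (A1 + A02)"]) (simp add: ac_simps)
next
  case (ob_lam k a)
  obtain P1 where P: "P = Lam P1" "substR (Suc k) N a P1" using substR_LamD[OF ob_lam(5)] by blast
  obtain A1 where A: "A = add_mset 0 A1" "node_depths a A1" using ob_lam(3) by (auto elim: node_depths_LamE)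
  obtain A01 where "A1 = add_mset 1 A01" "node_depths P1 (A01 + image_mset Suc B)"
    using ob_lam.IH[OF A(2) ob_lam(4) P(2)] by blast
  then show ?case using A P by (intro exI[of _ "add_mset 0 A01"]) (auto intro: nd_lam)
next
  case (ob_lamI k a)
  obtain P1 where P: "P = LamI P1" "substR (Suc k) N a P1" using substR_LamID[OF ob_lamI(5)] by blast
  obtain A1 where A: "A = add_mset 0 A1" "node_depths a A1" using ob_lamI(3) by (auto elim: node_depths_LamIE)
  obtain A01 where "A1 = add_mset 1 A01" "node_depths P1 (A01 + image_mset Suc B)"
    using ob_lamI.IH[OF A(2) ob_lamI(4) P(2)] by blast
  then show ?case using A P by (intro exI[of _ "add_mset 0 A01"]) (auto intro: nd_lamI)
next
  case (ob_lamC k a)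
  obtain P1 where P: "P = LamC P1" "substR (Suc k) N a P1" using substR_LamCD[OF ob_lamC(5)] by blast
  obtain A1 where A: "A = add_mset 0 A1" "node_depths a A1" using ob_lamC(3) by (auto elim: node_depths_LamCE)
  obtain A01 where "A1 = add_mset 1 A01" "node_depths P1 (A01 + image_mset Suc B)"
    using ob_lamC.IH[OF A(2) ob_lamC(4) P(2)] by blast
  then show ?case using A P by (intro exI[of _ "add_mset 0 A01"]) (auto intro: nd_lamC)
next
  case (ob_boxI k a)
  obtain P1 where P: "P = BoxI P1" "substR k N a P1" using substR_BoxID[OF ob_boxI(4)] by blast
  obtain A1 where A: "A = add_mset 0 (image_mset Suc A1)" "node_depths a A1"
    using ob_boxI(2) by (auto elim: node_depths_BoxIE)
  obtain A01 where 1: "A1 = A01 + replicate_mset 1 0" "node_depths P1 (A01 + repeat_mset 1 B)"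
    using node_depths_subst_unboxed[OF ob_boxI(1) A(2) ob_boxI(3) P(2)] by blast
  then have "node_depths P (add_mset 0 (image_mset Suc (A01 + B)))"
    unfolding P(1) using nd_boxI[of P1 "A01 + B"] by simp
  then show ?case using A(1) 1(1) by (intro exI[of _ "add_mset 0 (image_mset Suc A01)"]) simp
qed

lemma multiset_less_one_step:
  fixes I J K :: "'a::preorder multiset"
  assumes "J \<noteq> {#}" "\<forall>k\<in>#K. \<exists>j\<in>#J. k < j"
  shows "I + K < I + J"
  unfolding less_multiset_def by (rule one_step_implies_multp[OF assms])

lemma basic_node_depths_less:
  assumes "basic M M'" "tyI R G M" "node_depths M A"
  shows "\<exists>A'. node_depths M' A' \<and> A' < A"
  using assms(1)
proof cases
  case (b_lin N a)
  obtain G1 G2 where h: "app_split G G1 G2" "tyI R G1 (Lam a)" "tyI R G2 N"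
    using tyI_AppD assms(2) b_lin(1) by blast
  have "occurs_unboxed 0 a 1" using tyI_occurs_unboxed_PL[OF tyI_LamD[OF h(2)]] by simp
  moreover obtain A1 B where A: "A = add_mset 0 (A1 + B)" "node_depths (Lam a) A1" "node_depths N B"
    using assms(3) b_lin(1) by (auto elim: node_depths_AppE)
  moreover obtain Aa where Aa: "A1 = add_mset 0 Aa" "node_depths a Aa"
    using A(2) by (rule node_depths_LamE)
  ultimately obtain A0 where r: "Aa = A0 + replicate_mset 1 0" "node_depths M' (A0 + repeat_mset 1 B)"
    using node_depths_subst_unboxed b_lin(2) by blast
  have "A0 + B + {#} < A0 + B + {#0, 0, 0#}" by (rule multiset_less_one_step) auto
  then show ?thesis using r(2) by (auto simp: A(1) Aa(1) r(1) ac_simps)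
next
  case (b_coi N a)
  obtain G1 G2 where h: "app_split G G1 G2" "tyI R G1 (LamC a)" "tyI R G2 (BoxC N)"
    using tyI_AppD assms(2) b_coi(1) by blast
  have "absent 0 a" using tyI_absent[OF tyI_LamCD[OF h(2)]] by simp
  moreover obtain A1 B where A: "A = add_mset 0 (A1 + B)" "node_depths (LamC a) A1" "node_depths (BoxC N) B"
    using assms(3) b_coi(1) by (auto elim: node_depths_AppE)
  moreover obtain Aa where Aa: "A1 = add_mset 0 Aa" "node_depths a Aa"
    using A(2) by (rule node_depths_LamCE)
  ultimately have "node_depths M' Aa" using node_depths_subst_absent b_coi(2) by blast
  moreover have "B = {#0#}" using A(3) by (rule node_depths_BoxCE)
  moreover have "Aa + {#} < Aa + {#0, 0, 0#}" by (rule multiset_less_one_step) auto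
  ultimately show ?thesis by (auto simp: A(1) Aa(1) ac_simps)
next
  case (b_ind N a)
  obtain G1 G2 where h: "app_split G G1 G2" "tyI R G1 (LamI a)" "tyI R G2 (BoxI N)"
    using tyI_AppD assms(2) b_ind(1) by blast
  obtain A1 B2 where A: "A = add_mset 0 (A1 + B2)" "node_depths (LamI a) A1" "node_depths (BoxI N) B2"
    using assms(3) b_ind(1) by (auto elim: node_depths_AppE)
  obtain Aa where Aa: "A1 = add_mset 0 Aa" "node_depths a Aa" using A(2) by (rule node_depths_LamIE)
  obtain B where B: "B2 = add_mset 0 (image_mset Suc B)" "node_depths N B"
    using A(3) by (rule node_depths_BoxIE)
  from tyI_LamID[OF h(2)] show ?thesis
  proof
    assume "tyI R (push PH G1) a"
    then obtain n where "occurs_unboxed 0 a n" using tyI_occurs_unboxed_PH by fastforce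
    then obtain A0 where r: "Aa = A0 + replicate_mset n 0" "node_depths M' (A0 + repeat_mset n B)"
      using node_depths_subst_unboxed Aa(2) B(2) b_ind(2) by blast
    have "\<forall>k\<in>#repeat_mset n B. k \<in># B"
      by (metis count_repeat_mset count_eq_zero_iff mult_zero_right)
    then have "A0 + repeat_mset n B < A0 + ({#0, 0, 0#} + replicate_mset n 0 + image_mset Suc B)"
      by (intro multiset_less_one_step) auto
    then show ?thesis using r(2) by (auto simp: A(1) Aa(1) B(1) r(1) ac_simps)
  next
    assume "tyI R (push PI G1) a"
    then have "occurs_once_boxed 0 a" using tyI_occurs_once_boxed by fastforce
    then obtain A0 where r: "Aa = add_mset 1 A0" "node_depths M' (A0 + image_mset Suc B)"
      using node_depths_subst_boxed_once Aa(2) B(2) b_ind(2) by blast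
    have "A0 + image_mset Suc B + {#} < A0 + image_mset Suc B + {#0, 0, 0, 1#}"
      by (rule multiset_less_one_step) auto
    then show ?thesis using r(2) by (auto simp: A(1) Aa(1) B(1) r(1) ac_simps)
  qed
qed

lemma ired_node_depths_less:
  assumes "ired M M'" "tyI R G M" "node_depths M A"
  shows "\<exists>A'. node_depths M' A' \<and> A' < A"
  using assms
proof (induction arbitrary: G A rule: ired.induct)
  case (ired_basic M N)
  then show ?case using basic_node_depths_less by blast
next
  case (ired_appL M M' N)
  obtain G1 where "tyI R G1 M" using tyI_AppD[OF ired_appL(3)] by blast
  moreover obtain A1 B where A: "A = add_mset 0 (A1 + B)" "node_depths M A1" "node_depths N B"
    using ired_appL(4) by (rule node_depths_AppE)
  ultimately obtain A1' where "node_depths M' A1'" "A1' < A1" using ired_appL.IH by blast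
  then show ?case using A by (auto intro!: nd_app add_mset_lt_right_lt union_le_mono1)
next
  case (ired_appR N N' M)
  obtain G2 where "tyI R G2 N" using tyI_AppD[OF ired_appR(3)] by blast
  moreover obtain A1 B where A: "A = add_mset 0 (A1 + B)" "node_depths M A1" "node_depths N B"
    using ired_appR(4) by (rule node_depths_AppE)
  ultimately obtain B' where "node_depths N' B'" "B' < B" using ired_appR.IH by blast
  then show ?case using A by (auto intro!: nd_app add_mset_lt_right_lt union_le_mono2)
next
  case (ired_lam M M')
  obtain A1 where A: "A = add_mset 0 A1" "node_depths M A1" using ired_lam(4) by (rule node_depths_LamE)
  obtain A1' where "node_depths M' A1'" "A1' < A1"
    using ired_lam.IH[OF tyI_LamD[OF ired_lam(3)] A(2)] by blast
  then show ?case using A by (auto intro!: nd_lam add_mset_lt_right_lt)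
next
  case (ired_lamC M M')
  obtain A1 where A: "A = add_mset 0 A1" "node_depths M A1" using ired_lamC(4) by (rule node_depths_LamCE)
  obtain A1' where "node_depths M' A1'" "A1' < A1"
    using ired_lamC.IH[OF tyI_LamCD[OF ired_lamC(3)] A(2)] by blast
  then show ?case using A by (auto intro!: nd_lamC add_mset_lt_right_lt)
next
  case (ired_lamI M M')
  obtain A1 where A: "A = add_mset 0 A1" "node_depths M A1" using ired_lamI(4) by (rule node_depths_LamIE)
  obtain G' where "tyI R G' M" using tyI_LamID[OF ired_lamI(3)] by blast
  then obtain A1' where "node_depths M' A1'" "A1' < A1" using ired_lamI.IH A(2) by blast
  then show ?case using A by (auto intro!: nd_lamI add_mset_lt_right_lt)
next
  case (ired_boxI M M')
  obtain A1 where A: "A = add_mset 0 (image_mset Suc A1)" "node_depths M A1"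
    using ired_boxI(4) by (rule node_depths_BoxIE)
  obtain A1' where "node_depths M' A1'" "A1' < A1"
    using ired_boxI.IH[OF conjunct2[OF tyI_BoxID[OF ired_boxI(3)]] A(2)] by blast
  then show ?case using A by (auto intro!: nd_boxI add_mset_lt_right_lt image_mset_strict_mono)
qed

lemma ired_normalizes:
  assumes "ty G M"
  shows "\<exists>P. ired\<^sup>*\<^sup>* M P \<and> (\<forall>Q. \<not> ired P Q)"
proof -
  obtain A where "node_depths M A" using tyI_node_depths[OF ty_tyI[OF assms]] by blast
  then show ?thesis
    using assms
  proof (induction A arbitrary: M G rule: less_induct)
    case (less A)
    show ?case
    proof (cases "\<exists>Q. ired M Q")
      case True
      then obtain M' where step: "ired M M'" by blast
      obtain G' where "tyI ty G' M'" using ired_subject_reduction[OF step ty_tyI[OF less.prems(2)]] by blast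
      moreover obtain A' where "node_depths M' A'" "A' < A"
        using ired_node_depths_less[OF step ty_tyI[OF less.prems(2)] less.prems(1)] by blast
      ultimately obtain P where "ired\<^sup>*\<^sup>* M' P" "\<forall>Q. \<not> ired P Q" using less.IH tyI_ty by blast
      then show ?thesis using step by (meson converse_rtranclp_into_rtranclp)
    qed blast
  qed
qed

definition ired_nf :: "trm \<Rightarrow> trm" where
  "ired_nf M = (SOME P. ired\<^sup>*\<^sup>* M P \<and> (\<forall>Q. \<not> ired P Q))"

lemma ired_nf:
  assumes "ty G M"
  shows "ired\<^sup>*\<^sup>* M (ired_nf M)" "\<not> ired (ired_nf M) Q"
  using someI_ex[OF ired_normalizes[OF assms]] unfolding ired_nf_def by blast+

lemma ty_ired_nf: "ty G M \<Longrightarrow> \<exists>G'. env_marked G G' \<and> ty G' (ired_nf M)"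
  using ireds_subject_reduction ired_nf(1) by blast

section \<open>Normalisation under coinductive boxes\<close>

primcorec deep_nf :: "trm \<Rightarrow> trm" where
  "deep_nf t = (case t of
      Var i \<Rightarrow> Var i
    | App a b \<Rightarrow> App (deep_nf a) (deep_nf b)
    | Lam a \<Rightarrow> Lam (deep_nf a)
    | LamI a \<Rightarrow> LamI (deep_nf a)
    | LamC a \<Rightarrow> LamC (deep_nf a)
    | BoxI a \<Rightarrow> BoxI (deep_nf a)
    | BoxC a \<Rightarrow> BoxC (deep_nf (ired_nf a)))"

lemma deep_nf_simps [simp]:
  "deep_nf (Var i) = Var i"
  "deep_nf (App a b) = App (deep_nf a) (deep_nf b)"
  "deep_nf (Lam a) = Lam (deep_nf a)"
  "deep_nf (LamI a) = LamI (deep_nf a)"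
  "deep_nf (LamC a) = LamC (deep_nf a)"
  "deep_nf (BoxI a) = BoxI (deep_nf a)"
  "deep_nf (BoxC a) = BoxC (deep_nf (ired_nf a))"
  by (subst deep_nf.code; simp)+

lemma deep_nf_eq_AppD: "deep_nf P = App a b \<Longrightarrow> \<exists>x y. P = App x y \<and> a = deep_nf x \<and> b = deep_nf y"
  by (cases P) auto

lemma deep_nf_eq_LamD: "deep_nf P = Lam a \<Longrightarrow> \<exists>x. P = Lam x \<and> a = deep_nf x"
  by (cases P) auto

lemma deep_nf_eq_LamID: "deep_nf P = LamI a \<Longrightarrow> \<exists>x. P = LamI x \<and> a = deep_nf x"
  by (cases P) auto

lemma deep_nf_eq_LamCD: "deep_nf P = LamC a \<Longrightarrow> \<exists>x. P = LamC x \<and> a = deep_nf x"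
  by (cases P) auto

lemma deep_nf_eq_BoxID: "deep_nf P = BoxI a \<Longrightarrow> \<exists>x. P = BoxI x \<and> a = deep_nf x"
  by (cases P) auto

lemma deep_nf_eq_BoxCD: "deep_nf P = BoxC a \<Longrightarrow> \<exists>x. P = BoxC x \<and> a = deep_nf (ired_nf x)"
  by (cases P) auto

definition ired_normal_term :: "trm \<Rightarrow> bool" where
  "ired_normal_term P \<longleftrightarrow> is_term P \<and> (\<forall>Q. \<not> ired P Q)"

lemma ired_normal_term_ired_nf:
  assumes "is_term M"
  shows "ired_normal_term (ired_nf M)"
proof -
  obtain G where G: "finite (dom G)" "ty G M" using assms unfolding is_term_def by blast
  obtain G' where G': "env_marked G G'" "ty G' (ired_nf M)" using ty_ired_nf[OF G(2)] by blast
  have "finite (dom G')" using dom_env_marked[OF G'(1)] G(1) by simp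
  then show ?thesis unfolding ired_normal_term_def is_term_def using ired_nf(2)[OF G(2)] G'(2) by blast
qed

lemma ired_normal_term_AppD: "ired_normal_term (App a b) \<Longrightarrow> ired_normal_term a \<and> ired_normal_term b"
  unfolding ired_normal_term_def is_term_def
  by (metis finite_dom_app_split tyI_AppD[OF ty_tyI] tyI_ty ired_appL ired_appR)

lemma ired_normal_term_LamD: "ired_normal_term (Lam a) \<Longrightarrow> ired_normal_term a"
  unfolding ired_normal_term_def is_term_def
  by (metis finite_dom_push tyI_LamD[OF ty_tyI] tyI_ty ired_lam)

lemma ired_normal_term_LamID: "ired_normal_term (LamI a) \<Longrightarrow> ired_normal_term a"
  unfolding ired_normal_term_def is_term_def
  by (metis finite_dom_push tyI_LamID[OF ty_tyI] tyI_ty ired_lamI)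

lemma ired_normal_term_LamCD: "ired_normal_term (LamC a) \<Longrightarrow> ired_normal_term a"
  unfolding ired_normal_term_def is_term_def
  by (metis finite_dom_push tyI_LamCD[OF ty_tyI] tyI_ty ired_lamC)

lemma ired_normal_term_BoxID: "ired_normal_term (BoxI a) \<Longrightarrow> ired_normal_term a"
  unfolding ired_normal_term_def is_term_def
  by (metis finite_dom_mi_env tyI_BoxID[OF ty_tyI] tyI_ty ired_boxI)

lemma ired_normal_term_BoxCD: "ired_normal_term (BoxC a) \<Longrightarrow> is_term a"
  unfolding ired_normal_term_def is_term_def
  by (metis finite_dom_mc_env tyI_BoxCD[OF ty_tyI])

lemma deep_nf_no_step: "step Q Q' \<Longrightarrow> Q = deep_nf P \<Longrightarrow> ired_normal_term P \<Longrightarrow> False"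
proof (induction arbitrary: P rule: step.induct)
  case (st_basic M N)
  have "\<exists>Q. ired P Q"
    using st_basic(1)
  proof cases
    case (b_lin N1 M1)
    then obtain z y where "P = App (Lam z) y"
      using st_basic(2) deep_nf_eq_AppD deep_nf_eq_LamD by metis
    then show ?thesis using ired_basic[OF basic.b_lin[OF substR_substitute]] by blast
  next
    case (b_ind N1 M1)
    then obtain z w where "P = App (LamI z) (BoxI w)"
      using st_basic(2) deep_nf_eq_AppD deep_nf_eq_LamID deep_nf_eq_BoxID by metis
    then show ?thesis using ired_basic[OF basic.b_ind[OF substR_substitute]] by blast
  next
    case (b_coi N1 M1)
    then obtain z w where "P = App (LamC z) (BoxC w)"
      using st_basic(2) deep_nf_eq_AppD deep_nf_eq_LamCD deep_nf_eq_BoxCD by metis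
    then show ?thesis using ired_basic[OF basic.b_coi[OF substR_substitute]] by blast
  qed
  then show ?case using st_basic(3) unfolding ired_normal_term_def by blast
next
  case (st_appL M M' N)
  then show ?case using deep_nf_eq_AppD ired_normal_term_AppD by metis
next
  case (st_appR N N' M)
  then show ?case using deep_nf_eq_AppD ired_normal_term_AppD by metis
next
  case (st_lam M M')
  then show ?case using deep_nf_eq_LamD ired_normal_term_LamD by metis
next
  case (st_lamI M M')
  then show ?case using deep_nf_eq_LamID ired_normal_term_LamID by metis
next
  case (st_lamC M M')
  then show ?case using deep_nf_eq_LamCD ired_normal_term_LamCD by metis
next
  case (st_boxI M M')
  then show ?case using deep_nf_eq_BoxID ired_normal_term_BoxID by metis
next
  case (st_boxC M M')
  then show ?case using deep_nf_eq_BoxCD ired_normal_term_BoxCD ired_normal_term_ired_nf by metis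
qed

lemma normal_form_deep_nf: "ired_normal_term P \<Longrightarrow> normal_form (deep_nf P)"
  unfolding normal_form_def using deep_nf_no_step by blast

lemma ty_ired_nf_no_PI:
  assumes "\<forall>y. G y \<noteq> Some PI" "ty G M"
  shows "ty G (ired_nf M)"
  using ty_ired_nf[OF assms(2)] env_marked_no_PI[OF assms(1)] by metis

definition typed_deep_nf :: "env \<Rightarrow> trm \<Rightarrow> bool" where
  "typed_deep_nf G Q \<longleftrightarrow> (\<exists>P. Q = deep_nf P \<and> ty G P \<and> finite (dom G) \<and> (\<forall>Q. \<not> ired P Q))"

lemma tyI_deep_nf:
  "tyI ty G P \<Longrightarrow> finite (dom G) \<Longrightarrow> \<forall>Q. \<not> ired P Q \<Longrightarrow>
    tyI (\<lambda>G Q. typed_deep_nf G Q \<or> ty G Q) G (deep_nf P)"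
proof (induction rule: tyI.induct)
  case (t_var G x)
  then show ?case by (simp add: tyI.t_var)
next
  case (t_app G G1 G2 M N)
  then show ?case
    using finite_dom_app_split[OF t_app(1,6)] by (auto intro!: tyI.t_app intro: ired.intros)
next
  case (t_ll G M)
  then show ?case using finite_dom_push by (auto intro!: tyI.t_ll intro: ired.intros)
next
  case (t_li1 G M)
  then show ?case using finite_dom_push by (auto intro!: tyI.t_li1 intro: ired.intros)
next
  case (t_li2 G M)
  then show ?case using finite_dom_push by (auto intro!: tyI.t_li2 intro: ired.intros)
next
  case (t_lc G M)
  then show ?case using finite_dom_push by (auto intro!: tyI.t_lc intro: ired.intros)
next
  case (t_mi G M)
  then show ?case using finite_dom_mi_env by (auto intro!: tyI.t_mi intro: ired.intros)
next
  case (t_mc G M)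
  have "\<forall>y. mc_env G y \<noteq> Some PI"
  proof
    fix y
    have "pat_mc (G y) \<in> {None, Some PD}" using t_mc(1) pat_box_nonlinear(2) by blast
    then show "mc_env G y \<noteq> Some PI" by (auto simp: mc_env_apply)
  qed
  then have "ty (mc_env G) (ired_nf M)" using ty_ired_nf_no_PI t_mc(2) by blast
  then have "typed_deep_nf (mc_env G) (deep_nf (ired_nf M))"
    unfolding typed_deep_nf_def using finite_dom_mc_env[OF t_mc(3)] ired_nf(2)[OF t_mc(2)] by blast
  then show ?case using t_mc(1) by (simp add: tyI.t_mc)
qed

lemma is_term_deep_nf:
  assumes "ired_normal_term P"
  shows "is_term (deep_nf P)"
proof -
  obtain G where G: "finite (dom G)" "ty G P" "\<forall>Q. \<not> ired P Q"
    using assms unfolding ired_normal_term_def is_term_def by blast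
  have "ty G (deep_nf P)"
  proof (rule ty_coinduct_upto[where X = typed_deep_nf])
    show "typed_deep_nf G (deep_nf P)" unfolding typed_deep_nf_def using G by blast
  next
    fix G Q assume "typed_deep_nf G Q"
    then obtain P where h: "Q = deep_nf P" "ty G P" "finite (dom G)" "\<forall>Q. \<not> ired P Q"
      unfolding typed_deep_nf_def by blast
    show "tyI (\<lambda>G Q. typed_deep_nf G Q \<or> ty G Q) G Q"
      unfolding h(1) by (rule tyI_deep_nf[OF ty_tyI[OF h(2)] h(3,4)])
  qed
  then show ?thesis unfolding is_term_def using G(1) by blast
qed

definition reaches_deep_nf :: "trm \<Rightarrow> trm \<Rightarrow> bool" where
  "reaches_deep_nf M N \<longleftrightarrow> is_term M \<and> N = deep_nf (ired_nf M)"

lemma leadsI_deep_nf: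
  "tyI ty G P \<Longrightarrow> finite (dom G) \<Longrightarrow> leadsI (\<lambda>M N. reaches_deep_nf M N \<or> infred M N) P (deep_nf P)"
proof (induction rule: tyI.induct)
  case (t_var G x)
  then show ?case by (simp add: l_var)
next
  case (t_app G G1 G2 M N)
  then show ?case using finite_dom_app_split by (simp add: l_app)
next
  case (t_ll G M)
  then show ?case using finite_dom_push by (simp add: l_lam)
next
  case (t_li1 G M)
  then show ?case using finite_dom_push by (simp add: l_lamI)
next
  case (t_li2 G M)
  then show ?case using finite_dom_push by (simp add: l_lamI)
next
  case (t_lc G M)
  then show ?case using finite_dom_push by (simp add: l_lamC)
next
  case (t_mi G M)
  then show ?case using finite_dom_mi_env by (simp add: l_boxI)
next
  case (t_mc G M)
  have "is_term M" unfolding is_term_def using t_mc(2) finite_dom_mc_env[OF t_mc(3)] by blast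
  then show ?case by (simp add: l_boxC reaches_deep_nf_def)
qed

lemma infred_deep_nf:
  assumes "is_term M"
  shows "infred M (deep_nf (ired_nf M))"
proof -
  have "reaches_deep_nf M (deep_nf (ired_nf M))" using assms by (simp add: reaches_deep_nf_def)
  then show ?thesis
  proof (rule infred.coinduct[of reaches_deep_nf])
    fix M L assume "reaches_deep_nf M L"
    then obtain G where G: "finite (dom G)" "ty G M" "L = deep_nf (ired_nf M)"
      unfolding reaches_deep_nf_def is_term_def by blast
    obtain G' where G': "env_marked G G'" "ty G' (ired_nf M)" using ty_ired_nf[OF G(2)] by blast
    have "leadsI (\<lambda>M N. reaches_deep_nf M N \<or> infred M N) (ired_nf M) (deep_nf (ired_nf M))"
      using leadsI_deep_nf[OF ty_tyI[OF G'(2)]] dom_env_marked[OF G'(1)] G(1) by simp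
    moreover have "step\<^sup>*\<^sup>* M (ired_nf M)" using ireds_steps ired_nf(1)[OF G(2)] by blast
    ultimately show "\<exists>M' N L'. M = M' \<and> L = L' \<and> step\<^sup>*\<^sup>* M' N \<and>
        leadsI (\<lambda>M N. reaches_deep_nf M N \<or> infred M N) N L'"
      using G(3) by blast
  qed
qed

theorem mainTheorem15:
  assumes "is_term M"
  shows "\<exists>N. normal_form N \<and> is_term N \<and> infred M N"
proof (intro exI conjI)
  have "ired_normal_term (ired_nf M)" using ired_normal_term_ired_nf[OF assms] .
  then show "normal_form (deep_nf (ired_nf M))" "is_term (deep_nf (ired_nf M))"
    by (rule normal_form_deep_nf, rule is_term_deep_nf)
  show "infred M (deep_nf (ired_nf M))" using infred_deep_nf[OF assms] .
qed

end
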